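(* Let $n\ge 3$, $m\ge 1$, $k\in\mathbb{N}$, let $f_{\mathfrak{e}_k}:\mathbb{S}^{n-1}\to\mathbb{S}^{2m-1}$ be an eigenmap with energy density $\mathfrak{e}_k=k(k+n-2)/2$, let $\Phi:[0,1]\to\mathbb{R}$ be $C^2$, $c\in\mathbb{R}$, and $g(r)=c\ln r$. Define $u:B^n\setminus\{0\}\to\mathbb{S}^{2m}$ by $$u(x)=\big(R_{g(r)}f_{\mathfrak{e}_k}(x/r)\sin\Phi(r),\ \cos\Phi(r)\big),\qquad r=|x|,$$ and let $\hat u$ equal $u$ on $B^n\setminus\{0\}$ and an arbitrary fixed point of $\mathbb{S}^{2m}$ at $x=0$. Then $\hat u\in H^1_2(B^n,\mathbb{R}^{2m+1})$.
   Context: For $t\in\mathbb{R}$, $D_t=\begin{pmatrix}\cos t&-\sin t\\ \sin t&\cos t\end{pmatrix}$ and $R_t\in\mathrm{Mat}(2m,\mathbb{R})$ is the block-diagonal matrix with $m$ diagonal $2\times2$ blocks equal to $D_t$ and zero elsewhere. An eigenmap is a smooth harmonic map $\mathbb{S}^{n-1}\to\mathbb{S}^{2m-1}$ with constant energy density (components are harmonic homogeneous polynomials of common degree $k$). $B^n$ is the unit ball in $\mathbb{R}^n$. *)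

theory Defs
  imports "HOL-Analysis.Analysis"
begin

definition Dblock :: "real \<Rightarrow> nat \<Rightarrow> nat \<Rightarrow> real" where
  "Dblock t i j =
     (if i = 0 \<and> j = 0 then cos t else if i = 0 \<and> j = 1 then - sin t
      else if i = 1 \<and> j = 0 then sin t else if i = 1 \<and> j = 1 then cos t else 0)"

text \<open>R_t in Mat(2m,R): block diagonal with m blocks D_t (indices 0..2m-1).\<close>
definition Rmat :: "nat \<Rightarrow> real \<Rightarrow> nat \<Rightarrow> nat \<Rightarrow> real" where
  "Rmat m t i j = (if i < 2*m \<and> j < 2*m \<and> i div 2 = j div 2
                   then Dblock t (i mod 2) (j mod 2) else 0)"

definition Rapply :: "nat \<Rightarrow> real \<Rightarrow> (nat \<Rightarrow> real) \<Rightarrow> (nat \<Rightarrow> real)" where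
  "Rapply m t y = (\<lambda>i. \<Sum>j<2*m. Rmat m t i j * y j)"

definition partial :: "'n::finite \<Rightarrow> (real^'n \<Rightarrow> real) \<Rightarrow> real^'n \<Rightarrow> real" where
  "partial i f x = frechet_derivative f (at x) (axis i 1)"

fun iter_partial :: "'n::finite list \<Rightarrow> (real^'n \<Rightarrow> real) \<Rightarrow> real^'n \<Rightarrow> real" where
  "iter_partial [] f = f"
| "iter_partial (i # is) f = partial i (iter_partial is f)"

definition smooth_fun :: "(real^'n::finite \<Rightarrow> real) \<Rightarrow> bool" where
  "smooth_fun f \<longleftrightarrow> (\<forall>is x. iter_partial is f differentiable (at x))"

definition test_fun :: "(real^'n::finite) set \<Rightarrow> (real^'n \<Rightarrow> real) \<Rightarrow> bool" where
  "test_fun U \<phi> \<longleftrightarrow> smooth_fun \<phi> \<and>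
     (\<exists>K. compact K \<and> K \<subseteq> U \<and> (\<forall>x. x \<notin> K \<longrightarrow> \<phi> x = 0))"

definition laplacian :: "(real^'n::finite \<Rightarrow> real) \<Rightarrow> real^'n \<Rightarrow> real" where
  "laplacian f x = (\<Sum>i\<in>UNIV. partial i (partial i f) x)"

definition monomial_fun :: "('n::finite \<Rightarrow> nat) \<Rightarrow> real^'n \<Rightarrow> real" where
  "monomial_fun a x = (\<Prod>i\<in>UNIV. (x $ i) ^ a i)"

definition homog_poly :: "nat \<Rightarrow> (real^'n::finite \<Rightarrow> real) \<Rightarrow> bool" where
  "homog_poly k P \<longleftrightarrow> (\<exists>c :: ('n \<Rightarrow> nat) \<Rightarrow> real.
      \<forall>x. P x = (\<Sum>a\<in>{a. sum a UNIV = k}. c a * monomial_fun a x))"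

definition harmonic_fun :: "(real^'n::finite \<Rightarrow> real) \<Rightarrow> bool" where
  "harmonic_fun P \<longleftrightarrow> (\<forall>x. laplacian P x = 0)"

text \<open>An eigenmap S^{n-1} -> S^{2m-1} of degree k: its components F_0,...,F_{2m-1}
  are harmonic homogeneous polynomials of common degree k, and F maps the unit
  sphere into the unit sphere of R^{2m}.  (Values of F at indices >= 2m are irrelevant.)\<close>
definition eigenmap :: "nat \<Rightarrow> nat \<Rightarrow> (real^'n::finite \<Rightarrow> nat \<Rightarrow> real) \<Rightarrow> bool" where
  "eigenmap m k F \<longleftrightarrow>
     (\<forall>j<2*m. homog_poly k (\<lambda>x. F x j) \<and> harmonic_fun (\<lambda>x. F x j)) \<and>
     (\<forall>x. norm x = 1 \<longrightarrow> (\<Sum>j<2*m. (F x j)^2) = 1)"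

definition C2_on_unit :: "(real \<Rightarrow> real) \<Rightarrow> bool" where
  "C2_on_unit \<Phi> \<longleftrightarrow> (\<exists>\<Phi>1 \<Phi>2.
     (\<forall>r\<in>{0..1}. (\<Phi> has_real_derivative \<Phi>1 r) (at r within {0..1})) \<and>
     (\<forall>r\<in>{0..1}. (\<Phi>1 has_real_derivative \<Phi>2 r) (at r within {0..1})) \<and>
     continuous_on {0..1} \<Phi>2)"

definition L2_on :: "(real^'n::finite) set \<Rightarrow> (real^'n \<Rightarrow> real) \<Rightarrow> bool" where
  "L2_on U f \<longleftrightarrow> set_borel_measurable lebesgue U f \<and>
                 set_integrable lebesgue U (\<lambda>x. (f x)^2)"

definition sobolev_H12 :: "(real^'n::finite) set \<Rightarrow> (real^'n \<Rightarrow> real) \<Rightarrow> bool" where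
  "sobolev_H12 U f \<longleftrightarrow> L2_on U f \<and>
     (\<forall>i. \<exists>v. L2_on U v \<and>
        (\<forall>\<phi>. test_fun U \<phi> \<longrightarrow>
           (LINT x : U | lebesgue. f x * partial i \<phi> x) = - (LINT x : U | lebesgue. v x * \<phi> x)))"

definition sobolev_H12_vec :: "nat \<Rightarrow> (real^'n::finite) set \<Rightarrow> (real^'n \<Rightarrow> nat \<Rightarrow> real) \<Rightarrow> bool" where
  "sobolev_H12_vec d U u \<longleftrightarrow> (\<forall>j<d. sobolev_H12 U (\<lambda>x. u x j))"

end

theory Submission
  imports Defs
begin

(* Every component of the map is bounded on the unit ball and smooth off the origin, and its
   gradient is O(1 / |x|): the rotation angle c ln r and the profile Phi(r) have radial derivatives
   O(1 / r) and O(1), while F(x / r) is a homogeneous polynomial of the unit vector.  Since n >= 3,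
   |x|^(-2) is integrable near 0, so the pointwise gradient lies in L^2.  It is also the weak
   gradient: cutting out ball(0, e) with a cutoff whose gradient is O(1 / e) on a set of volume
   O(e^n) changes the integration by parts identity by O(e^(n-1)), which tends to 0. *)

lemma partial_eq_has_derivative:
  assumes "(f has_derivative f') (at x)"
  shows "partial i f x = f' (axis i 1)"
  using frechet_derivative_at[OF assms] unfolding partial_def by simp

lemma partial_transform_open:
  assumes "open S" "x \<in> S" "\<And>y. y \<in> S \<Longrightarrow> f y = g y" "g differentiable (at x)"
  shows "f differentiable (at x)" "partial i f x = partial i g x"
proof -
  have "(g has_derivative frechet_derivative g (at x)) (at x)"
    using assms(4) frechet_derivative_works by blast
  then have d: "(f has_derivative frechet_derivative g (at x)) (at x)"
    by (rule has_derivative_transform_within_open[OF _ assms(1,2)]) (use assms(3) in auto)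
  then show "f differentiable (at x)" unfolding differentiable_def by blast
  show "partial i f x = partial i g x"
    using partial_eq_has_derivative[OF d] unfolding partial_def by simp
qed

lemma partial_vanishing_open:
  assumes "open S" "x \<in> S" "\<And>y. y \<in> S \<Longrightarrow> f y = 0"
  shows "f differentiable (at x)" "partial i f x = 0"
proof -
  have z: "((\<lambda>y. 0) has_derivative (\<lambda>h. 0)) (at x)" by simp
  then have "(\<lambda>y. 0) differentiable (at x)" unfolding differentiable_def by blast
  from partial_transform_open[OF assms(1,2), of f, OF assms(3) this]
  show "f differentiable (at x)" "partial i f x = 0"
    using partial_eq_has_derivative[OF z] by simp_all
qed

lemma partial_mult:
  assumes "f differentiable (at x)" "g differentiable (at x)"
  shows "partial i (\<lambda>y. f y * g y) x = f x * partial i g x + partial i f x * g x"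
proof -
  have "((\<lambda>y. f y * g y) has_derivative
      (\<lambda>h. f x * frechet_derivative g (at x) h + frechet_derivative f (at x) h * g x)) (at x)"
    using assms by (intro has_derivative_mult) (auto simp: frechet_derivative_works)
  from partial_eq_has_derivative[OF this] show ?thesis unfolding partial_def by simp
qed

lemma has_real_derivative_along_line:
  assumes "(f has_derivative f') (at (x + t *\<^sub>R e))"
  shows "((\<lambda>s. f (x + s *\<^sub>R e)) has_real_derivative f' e) (at t)"
proof -
  have l: "((\<lambda>s. x + s *\<^sub>R e) has_derivative (\<lambda>s. s *\<^sub>R e)) (at t)"
    by (auto intro!: derivative_eq_intros)
  have "((f \<circ> (\<lambda>s. x + s *\<^sub>R e)) has_derivative (f' \<circ> (\<lambda>s. s *\<^sub>R e))) (at t)"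
    using diff_chain_at[OF l, of f f'] assms by simp
  moreover have "linear f'" using assms has_derivative_linear by blast
  ultimately show ?thesis
    unfolding has_field_derivative_def o_def
    by (simp add: linear_scale[of f'] mult.commute[of _ "f' e"])
qed

lemma partial_along_line:
  assumes "f differentiable (at (x + t *\<^sub>R axis i 1))"
  shows "((\<lambda>s. f (x + s *\<^sub>R axis i 1)) has_real_derivative partial i f (x + t *\<^sub>R axis i 1)) (at t)"
  using has_real_derivative_along_line[of f _ x t "axis i 1"] assms
  by (simp add: frechet_derivative_works partial_def)

lemma differentiable_compose_real:
  fixes f :: "'a::real_normed_vector \<Rightarrow> real"
  assumes "f differentiable (at x)" "(g has_real_derivative d) (at (f x))"
  shows "(\<lambda>y. g (f y)) differentiable (at x)"
proof -
  have "g differentiable (at (f x))" using assms(2) real_differentiable_def by blast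
  from differentiable_chain_at[OF assms(1) this] show ?thesis by (simp add: o_def)
qed

definition inv_Suc :: "nat \<Rightarrow> real" where "inv_Suc N = inverse (real (Suc N))"

lemma inv_Suc_pos: "inv_Suc N > 0" and inv_Suc_le_1: "inv_Suc N \<le> 1"
  by (auto simp: inv_Suc_def field_simps)

lemma inv_Suc_tendsto_0: "inv_Suc \<longlonglongrightarrow> 0"
  unfolding inv_Suc_def by (rule LIMSEQ_inverse_real_of_nat)

lemma filterlim_inv_Suc: "filterlim inv_Suc (at 0) sequentially"
  unfolding filterlim_at using inv_Suc_tendsto_0 inv_Suc_pos
  by (auto intro!: always_eventually simp: less_imp_neq[symmetric])

lemma difference_quotient_tendsto_partial:
  assumes "f differentiable (at x)"
  shows "(\<lambda>N. (f (x + inv_Suc N *\<^sub>R axis i 1) - f x) / inv_Suc N) \<longlonglongrightarrow> partial i f x"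
proof -
  have "((\<lambda>s. (f (x + s *\<^sub>R axis i 1) - f x) / s) \<longlongrightarrow> partial i f x) (at 0)"
    using partial_along_line[of f x 0 i] assms unfolding has_field_derivative_iff by simp
  from filterlim_compose[OF this filterlim_inv_Suc] show ?thesis by (simp add: o_def)
qed

text \<open>The partial derivative is the pointwise limit of difference quotients of the Borel function
  \<open>indicator U * f\<close>.\<close>
lemma borel_measurable_partial_on_open:
  fixes f :: "real^'n \<Rightarrow> real"
  assumes U: "open U" and diff: "\<And>x. x \<in> U \<Longrightarrow> f differentiable (at x)"
  shows "(\<lambda>x. if x \<in> U then partial i f x else 0) \<in> borel_measurable borel"
proof -
  have [measurable]: "U \<in> sets borel" using U by simp
  have "continuous_on U f"
    using diff by (intro continuous_at_imp_continuous_on) (auto intro: differentiable_imp_continuous_within)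
  then have [measurable]: "(\<lambda>x. indicator U x *\<^sub>R f x) \<in> borel_measurable borel"
    by (rule borel_measurable_continuous_on_indicator[rotated]) simp
  define e :: "real^'n" where "e = axis i 1"
  define q where "q N x = indicator U x *
    ((indicator U (x + inv_Suc N *\<^sub>R e) *\<^sub>R f (x + inv_Suc N *\<^sub>R e) - indicator U x *\<^sub>R f x) / inv_Suc N)"
    for N x
  have [measurable]: "q N \<in> borel_measurable borel" for N unfolding q_def by measurable
  have "(\<lambda>N. q N x) \<longlonglongrightarrow> (if x \<in> U then partial i f x else 0)" for x
  proof (cases "x \<in> U")
    case True
    obtain d where d: "d > 0" "ball x d \<subseteq> U" using U True open_contains_ball by blast
    have "eventually (\<lambda>N. inv_Suc N < d) sequentially"
      using order_tendstoD(2)[OF inv_Suc_tendsto_0 d(1)] .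
    then have "eventually (\<lambda>N. (f (x + inv_Suc N *\<^sub>R e) - f x) / inv_Suc N = q N x) sequentially"
    proof (rule eventually_mono)
      fix N assume "inv_Suc N < d"
      then have "x + inv_Suc N *\<^sub>R e \<in> U"
        using d inv_Suc_pos[of N] by (auto simp: e_def dist_norm)
      then show "(f (x + inv_Suc N *\<^sub>R e) - f x) / inv_Suc N = q N x" using True by (simp add: q_def)
    qed
    with difference_quotient_tendsto_partial[OF diff[OF True], of i]
    have "(\<lambda>N. q N x) \<longlonglongrightarrow> partial i f x" unfolding e_def by (rule Lim_transform_eventually)
    then show ?thesis using True by simp
  qed (simp add: q_def)
  then show ?thesis by (rule borel_measurable_LIMSEQ_real) simp
qed

lemma lborel_integral_translate:
  fixes f :: "'a::euclidean_space \<Rightarrow> real"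
  assumes [measurable]: "f \<in> borel_measurable borel"
  shows "integral\<^sup>L lborel (\<lambda>x. f (x + t)) = integral\<^sup>L lborel f"
proof -
  have e: "lborel = distr lborel borel (\<lambda>x::'a. t + x)"
    using lborel_affine[of 1 t] by (simp add: density_1)
  have "integral\<^sup>L lborel f = integral\<^sup>L (distr lborel borel (\<lambda>x::'a. t + x)) f"
    by (subst e) simp
  also have "\<dots> = integral\<^sup>L lborel (\<lambda>x. f (t + x))"
    by (rule integral_distr) auto
  finally show ?thesis by (simp add: add.commute)
qed

lemma integrable_bounded_vanishing_outside_ball:
  fixes f :: "'a::euclidean_space \<Rightarrow> real"
  assumes "f \<in> borel_measurable borel" "\<And>x. \<bar>f x\<bar> \<le> M" "\<And>x. norm x > R \<Longrightarrow> f x = 0"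
  shows "integrable lborel f"
proof (rule Bochner_Integration.integrable_bound)
  show "integrable lborel (\<lambda>x. M * indicator (cball 0 R) x)"
    by (intro integrable_mult_right integrable_real_indicator)
      (simp_all add: emeasure_lborel_cball_finite[unfolded infinity_ennreal_def])
  show "AE x in lborel. norm (f x) \<le> norm (M * indicator (cball 0 R) x)"
  proof (intro AE_I2)
    fix x :: 'a
    show "norm (f x) \<le> norm (M * indicator (cball 0 R) x)"
      using assms(2)[of x] assms(3)[of x] by (cases "norm x > R") (auto simp: indicator_def)
  qed
qed (use assms(1) in simp)

lemma difference_quotient_bound:
  assumes "\<And>s. g differentiable (at (x + s *\<^sub>R axis i 1))" "\<And>y. \<bar>partial i g y\<bar> \<le> M" "h > 0"
  shows "\<bar>(g (x + h *\<^sub>R axis i 1) - g x) / h\<bar> \<le> M"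
proof -
  obtain z where "g (x + h *\<^sub>R axis i 1) - g (x + 0 *\<^sub>R axis i 1) = (h - 0) * partial i g (x + z *\<^sub>R axis i 1)"
    using MVT2[of 0 h "\<lambda>s. g (x + s *\<^sub>R axis i 1)" "\<lambda>s. partial i g (x + s *\<^sub>R axis i 1)"]
      assms(3) partial_along_line[OF assms(1)] by blast
  then show ?thesis using assms(2,3) by simp
qed

lemma integral_difference_quotient_eq_0:
  fixes g :: "'a::euclidean_space \<Rightarrow> real"
  assumes cont: "continuous_on UNIV g" and supp: "\<And>x. norm x > R \<Longrightarrow> g x = 0"
  shows "(LBINT x. (g (x + t) - g x) / h) = 0"
proof -
  have [measurable]: "g \<in> borel_measurable borel" using cont by (rule borel_measurable_continuous_onI)
  have "compact (g ` cball 0 R)" by (intro compact_continuous_image continuous_on_subset[OF cont]) auto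
  then obtain Bg where Bg: "\<And>y. y \<in> g ` cball 0 R \<Longrightarrow> norm y \<le> Bg"
    using compact_imp_bounded bounded_iff by metis
  have gbd: "\<bar>g x\<bar> \<le> \<bar>Bg\<bar>" for x
    using Bg[of "g x"] supp[of x] by (cases "norm x > R") auto
  have "integrable lborel (\<lambda>x. g (x + t))"
  proof (rule integrable_bounded_vanishing_outside_ball[of _ "\<bar>Bg\<bar>" "R + norm t"])
    show "g (x + t) = 0" if "norm x > R + norm t" for x
      using supp norm_triangle_ineq2[of x "- t"] that by simp
  qed (use gbd in simp_all)
  moreover have "integrable lborel g"
    by (rule integrable_bounded_vanishing_outside_ball[OF _ gbd supp]) simp
  ultimately show ?thesis
    using lborel_integral_translate[of g t] by (simp add: Bochner_Integration.integral_diff)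
qed

text \<open>The difference quotients in direction \<open>i\<close> have integral zero by translation invariance
  and converge dominatedly to \<open>partial i g\<close>.\<close>
lemma integral_partial_eq_0:
  fixes g :: "real^'n \<Rightarrow> real"
  assumes diff: "\<And>x. g differentiable (at x)"
    and bnd: "\<And>x. \<bar>partial i g x\<bar> \<le> M"
    and supp: "\<And>x. norm x > R \<Longrightarrow> g x = 0"
  shows "integrable lborel (partial i g)" "integral\<^sup>L lborel (partial i g) = 0"
proof -
  define e :: "real^'n" where "e = axis i 1"
  define q where "q N x = (g (x + inv_Suc N *\<^sub>R e) - g x) / inv_Suc N" for N x
  have cont: "continuous_on UNIV g"
    using diff by (simp add: continuous_at_imp_continuous_on differentiable_imp_continuous_within)
  have [measurable]: "g \<in> borel_measurable borel" using cont by (rule borel_measurable_continuous_onI)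
  have far: "norm (x + inv_Suc N *\<^sub>R e) > R" if "norm x > R + 1" for x N
    using norm_triangle_ineq2[of x "- inv_Suc N *\<^sub>R e"] inv_Suc_le_1[of N] inv_Suc_pos[of N] that
    by (auto simp: e_def)
  have [measurable]: "q N \<in> borel_measurable borel" for N unfolding q_def by measurable
  have qbound: "norm (q N x) \<le> M * indicator (cball 0 (R+1)) x" for N x
  proof (cases "norm x > R + 1")
    case True
    then show ?thesis using supp[of x] supp[OF far[OF True]] by (simp add: q_def indicator_def)
  next
    case False
    then show ?thesis
      using difference_quotient_bound[OF diff bnd inv_Suc_pos] by (simp add: q_def e_def indicator_def)
  qed
  have w: "integrable lborel (\<lambda>x. M * indicator (cball 0 (R+1)) x :: real)"
    by (intro integrable_mult_right integrable_real_indicator)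
      (simp_all add: emeasure_lborel_cball_finite[unfolded infinity_ennreal_def])
  have qlim: "AE x in lborel. (\<lambda>N. q N x) \<longlonglongrightarrow> partial i g x"
    using difference_quotient_tendsto_partial[OF diff] by (simp add: q_def e_def)
  have [measurable]: "partial i g \<in> borel_measurable borel"
    using borel_measurable_partial_on_open[of UNIV g i] diff by simp
  have q0: "integral\<^sup>L lborel (q N) = 0" for N
    unfolding q_def by (rule integral_difference_quotient_eq_0[OF cont supp])
  show "integrable lborel (partial i g)"
    by (rule integrable_dominated_convergence[OF _ _ w qlim AE_I2[OF qbound]]) simp_all
  have "(\<lambda>N. integral\<^sup>L lborel (q N)) \<longlonglongrightarrow> integral\<^sup>L lborel (partial i g)"
    by (rule integral_dominated_convergence[OF _ _ w qlim AE_I2[OF qbound]]) simp_all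
  then show "integral\<^sup>L lborel (partial i g) = 0" by (simp add: q0 LIMSEQ_const_iff)
qed

section \<open>A cutoff near the origin\<close>

definition signed_square :: "real \<Rightarrow> real" where "signed_square t = t * \<bar>t\<bar>"

lemma signed_square_has_derivative: "(signed_square has_real_derivative 2 * \<bar>t\<bar>) (at t)"
proof -
  consider "t = 0" | "t > 0" | "t < 0" by linarith
  then show ?thesis
  proof cases
    case 1
    have "((\<lambda>y::real. \<bar>y\<bar>) \<longlongrightarrow> \<bar>0\<bar>) (at 0)" by (intro tendsto_intros)
    moreover have "eventually (\<lambda>y. \<bar>y\<bar> = (signed_square y - signed_square 0) / (y - 0)) (at (0::real))"
      by (auto simp: signed_square_def eventually_at_filter)
    ultimately show ?thesis using 1 tendsto_cong by (fastforce simp: has_field_derivative_iff)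
  next
    case 2
    have "((\<lambda>y. y * y) has_real_derivative 2 * \<bar>t\<bar>) (at t)"
      using 2 by (auto intro!: derivative_eq_intros)
    then show ?thesis
      by (rule has_field_derivative_transform_within_open[of _ _ _ "{0<..}"])
        (use 2 in \<open>auto simp: signed_square_def\<close>)
  next
    case 3
    have "((\<lambda>y. - (y * y)) has_real_derivative 2 * \<bar>t\<bar>) (at t)"
      using 3 by (auto intro!: derivative_eq_intros)
    then show ?thesis
      by (rule has_field_derivative_transform_within_open[of _ _ _ "{..<0}"])
        (use 3 in \<open>auto simp: signed_square_def\<close>)
  qed
qed

text \<open>A \<open>C\<^sup>1\<close> step from 1 to 0 on \<open>[1, 2]\<close>, made of two parabolic arcs meeting at \<open>3/2\<close>.\<close>
definition cutoff_profile :: "real \<Rightarrow> real" where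
  "cutoff_profile s = 1/2 - (signed_square (s - 1) - 2 * signed_square (s - 3/2) + signed_square (s - 2))"

definition cutoff_profile_deriv :: "real \<Rightarrow> real" where
  "cutoff_profile_deriv s = - (2 * \<bar>s - 1\<bar> - 4 * \<bar>s - 3/2\<bar> + 2 * \<bar>s - 2\<bar>)"

lemma cutoff_profile_has_derivative: "(cutoff_profile has_real_derivative cutoff_profile_deriv s) (at s)"
  unfolding cutoff_profile_def cutoff_profile_deriv_def
  by (auto intro!: derivative_eq_intros signed_square_has_derivative[THEN DERIV_chain2])

lemma cutoff_profile_eq_1: "s \<le> 1 \<Longrightarrow> cutoff_profile s = 1"
  and cutoff_profile_eq_0: "s \<ge> 2 \<Longrightarrow> cutoff_profile s = 0"
  by (simp_all add: cutoff_profile_def signed_square_def abs_if algebra_simps power2_eq_square)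

lemma cutoff_profile_bounds: "0 \<le> cutoff_profile s \<and> cutoff_profile s \<le> 1"
proof -
  consider "s \<le> 1" | "s \<ge> 2" | "1 < s" "s \<le> 3/2" | "3/2 < s" "s < 2" by linarith
  then show ?thesis
  proof cases
    case 3
    then have "cutoff_profile s = 1 - 2 * (s-1)^2"
      by (simp add: cutoff_profile_def signed_square_def abs_if algebra_simps power2_eq_square)
    moreover have "(s-1)^2 \<le> (1/2)^2" using 3 by (intro power_mono) auto
    ultimately show ?thesis by (simp add: power2_eq_square)
  next
    case 4
    then have "cutoff_profile s = 2 * (2 - s)^2"
      by (simp add: cutoff_profile_def signed_square_def abs_if algebra_simps power2_eq_square)
    moreover have "(2-s)^2 \<le> (1/2)^2" using 4 by (intro power_mono) auto
    ultimately show ?thesis by (simp add: power2_eq_square)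
  qed (simp_all add: cutoff_profile_eq_1 cutoff_profile_eq_0)
qed

lemma cutoff_profile_deriv_bound: "\<bar>cutoff_profile_deriv s\<bar> \<le> 2"
  and cutoff_profile_deriv_eq_0: "s \<le> 1 \<or> s \<ge> 2 \<Longrightarrow> cutoff_profile_deriv s = 0"
  unfolding cutoff_profile_deriv_def by (auto simp: abs_if)

lemma continuous_cutoff_profile_deriv: "continuous_on UNIV cutoff_profile_deriv"
  unfolding cutoff_profile_deriv_def by (intro continuous_intros)

definition cutoff :: "real \<Rightarrow> real^'n \<Rightarrow> real" where
  "cutoff e x = cutoff_profile ((x \<bullet> x) / e^2)"

definition cutoff_partial :: "real \<Rightarrow> 'n \<Rightarrow> real^'n \<Rightarrow> real" where
  "cutoff_partial e i x = cutoff_profile_deriv ((x \<bullet> x) / e^2) * (2 * x$i / e^2)"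

lemma cutoff_has_derivative:
  fixes x :: "real^'n"
  shows "(cutoff e has_derivative (\<lambda>h. ((h \<bullet> x + x \<bullet> h) / e^2) * cutoff_profile_deriv ((x \<bullet> x) / e^2))) (at x)"
proof -
  have "((\<lambda>x::real^'n. inverse (e^2) * (x \<bullet> x)) has_derivative (\<lambda>h. inverse (e^2) * (x \<bullet> h + h \<bullet> x))) (at x)"
    by (intro has_derivative_mult_right has_derivative_inner has_derivative_ident)
  then have "((\<lambda>x::real^'n. (x \<bullet> x) / e^2) has_derivative (\<lambda>h. (h \<bullet> x + x \<bullet> h) / e^2)) (at x)"
    by (simp add: field_simps add.commute)
  then show ?thesis unfolding cutoff_def
    by (rule DERIV_compose_FDERIV[OF cutoff_profile_has_derivative])
qed

lemma cutoff_differentiable: "cutoff e differentiable (at x)"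
  using cutoff_has_derivative unfolding differentiable_def by blast

lemma partial_cutoff: "partial i (cutoff e) x = cutoff_partial e i x"
  unfolding partial_eq_has_derivative[OF cutoff_has_derivative] cutoff_partial_def
  by (simp add: inner_axis inner_commute[of "axis i 1"])

lemma partial_one_minus_cutoff: "partial i (\<lambda>y. 1 - cutoff e y) x = - cutoff_partial e i x"
proof -
  have "((\<lambda>y. 1 - cutoff e y) has_derivative (\<lambda>h. 0 - frechet_derivative (cutoff e) (at x) h)) (at x)"
    using cutoff_differentiable by (intro has_derivative_diff has_derivative_const) (simp add: frechet_derivative_works)
  from partial_eq_has_derivative[OF this] show ?thesis
    by (simp add: partial_cutoff[symmetric] partial_def)
qed

lemma cutoff_eq_1: "e > 0 \<Longrightarrow> norm x < e \<Longrightarrow> cutoff e x = 1"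
  and cutoff_partial_eq_0_near: "e > 0 \<Longrightarrow> norm x < e \<Longrightarrow> cutoff_partial e i x = 0"
proof -
  assume "e > 0" "norm x < e"
  then have "(x \<bullet> x) / e^2 \<le> 1" by (simp add: power_strict_mono dot_square_norm less_imp_le)
  then show "cutoff e x = 1" "cutoff_partial e i x = 0"
    by (simp_all add: cutoff_def cutoff_partial_def cutoff_profile_eq_1 cutoff_profile_deriv_eq_0)
qed

lemma cutoff_eq_0: "e > 0 \<Longrightarrow> norm x \<ge> 2 * e \<Longrightarrow> cutoff e x = 0"
  and cutoff_partial_eq_0_far: "e > 0 \<Longrightarrow> norm x \<ge> 2 * e \<Longrightarrow> cutoff_partial e i x = 0"
proof -
  assume e: "e > 0" "norm x \<ge> 2 * e"
  then have "(2 * e)^2 \<le> (norm x)^2" by (intro power_mono) auto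
  then have "4 * e^2 \<le> x \<bullet> x" by (simp add: power_mult_distrib dot_square_norm)
  then have "2 * e^2 \<le> x \<bullet> x" using zero_le_power2[of e] by linarith
  then have "(x \<bullet> x) / e^2 \<ge> 2" using e by (simp add: le_divide_eq)
  then show "cutoff e x = 0" "cutoff_partial e i x = 0"
    by (simp_all add: cutoff_def cutoff_partial_def cutoff_profile_eq_0 cutoff_profile_deriv_eq_0)
qed

lemma cutoff_bounds: "0 \<le> cutoff e x \<and> cutoff e x \<le> 1"
  unfolding cutoff_def by (rule cutoff_profile_bounds)

lemma cutoff_partial_bound:
  assumes "e > 0"
  shows "\<bar>cutoff_partial e i x\<bar> \<le> (8 / e) * indicator (ball 0 (2 * e)) x"
proof (cases "norm x \<ge> 2 * e")
  case False
  have "\<bar>x$i\<bar> \<le> 2 * e" using False component_le_norm_cart[of x i] by simp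
  then have "\<bar>2 * x$i / e^2\<bar> \<le> 2 * (2 * e) / e^2"
    by (simp add: abs_mult divide_right_mono)
  then have "\<bar>cutoff_partial e i x\<bar> \<le> 2 * (2 * (2 * e) / e^2)"
    unfolding cutoff_partial_def abs_mult
    by (intro mult_mono cutoff_profile_deriv_bound) auto
  also have "\<dots> = 8 / e" using assms by (simp add: power2_eq_square field_simps)
  finally show ?thesis using False by (simp add: indicator_def)
qed (simp add: assms cutoff_partial_eq_0_far)

lemma borel_measurable_cutoff[measurable]: "cutoff e \<in> borel_measurable borel"
  using cutoff_differentiable by (intro borel_measurable_continuous_onI continuous_at_imp_continuous_on)
    (auto intro: differentiable_imp_continuous_within)

lemma borel_measurable_cutoff_partial[measurable]: "cutoff_partial e i \<in> borel_measurable borel"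
  unfolding cutoff_partial_def divide_inverse
  by (intro borel_measurable_continuous_onI continuous_intros
      continuous_on_compose2[OF continuous_cutoff_profile_deriv]) auto

lemma cutoff_tendsto_0:
  assumes "x \<noteq> 0"
  shows "(\<lambda>N. cutoff (inv_Suc N) x) \<longlonglongrightarrow> 0"
proof -
  have "eventually (\<lambda>N. inv_Suc N < norm x / 2) sequentially"
    using order_tendstoD(2)[OF inv_Suc_tendsto_0, of "norm x / 2"] assms by simp
  then have "eventually (\<lambda>N. cutoff (inv_Suc N) x = 0) sequentially"
    by (rule eventually_mono) (intro cutoff_eq_0 inv_Suc_pos, simp)
  then show ?thesis by (rule tendsto_eventually)
qed

lemma integrable_times_one_minus_cutoff:
  fixes h :: "real^'n \<Rightarrow> real"
  assumes [measurable]: "h \<in> borel_measurable borel" and "integrable lborel h"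
  shows "integrable lborel (\<lambda>x. h x * (1 - cutoff e x))"
proof (rule Bochner_Integration.integrable_bound)
  show "AE x in lborel. norm (h x * (1 - cutoff e x)) \<le> norm (h x)"
  proof (intro AE_I2)
    fix x :: "real^'n"
    have "\<bar>1 - cutoff e x\<bar> \<le> 1" using cutoff_bounds[of e x] by auto
    then show "norm (h x * (1 - cutoff e x)) \<le> norm (h x)"
      by (simp add: abs_mult mult_left_le)
  qed
qed (use assms(2) in simp_all)

lemma integrable_times_cutoff_partial:
  fixes h :: "real^'n \<Rightarrow> real"
  assumes "e > 0" and [measurable]: "h \<in> borel_measurable borel" and bnd: "\<And>x. \<bar>h x\<bar> \<le> M"
  shows "integrable lborel (\<lambda>x. h x * cutoff_partial e i x)"
proof (rule integrable_bounded_vanishing_outside_ball)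
  show "\<bar>h x * cutoff_partial e i x\<bar> \<le> \<bar>M\<bar> * (8 / e)" for x
    unfolding abs_mult using bnd[of x] cutoff_partial_bound[OF assms(1), of i x] assms(1)
    by (intro mult_mono) (auto simp: indicator_def split: if_splits intro: order_trans)
  show "norm x > 2 * e \<Longrightarrow> h x * cutoff_partial e i x = 0" for x
    using cutoff_partial_eq_0_far[OF assms(1), of x i] by simp
qed simp

lemma integral_one_minus_cutoff_tendsto:
  fixes h :: "real^'n \<Rightarrow> real"
  assumes [measurable]: "h \<in> borel_measurable borel" and "integrable lborel h"
  shows "(\<lambda>N. integral\<^sup>L lborel (\<lambda>x. h x * (1 - cutoff (inv_Suc N) x))) \<longlonglongrightarrow> integral\<^sup>L lborel h"
proof (rule integral_dominated_convergence[where w="\<lambda>x. \<bar>h x\<bar>"])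
  show "AE x in lborel. (\<lambda>N. h x * (1 - cutoff (inv_Suc N) x)) \<longlonglongrightarrow> h x"
    using AE_lborel_singleton[of "0::real^'n"]
  proof (rule eventually_mono)
    fix x :: "real^'n" assume "x \<noteq> 0"
    show "(\<lambda>N. h x * (1 - cutoff (inv_Suc N) x)) \<longlonglongrightarrow> h x"
      using tendsto_mult[OF tendsto_const tendsto_diff[OF tendsto_const cutoff_tendsto_0[OF \<open>x \<noteq> 0\<close>]],
          of "h x" 1]
      by simp
  qed
  show "AE x in lborel. norm (h x * (1 - cutoff (inv_Suc N) x)) \<le> \<bar>h x\<bar>" for N
  proof (intro AE_I2)
    fix x :: "real^'n"
    have "\<bar>1 - cutoff (inv_Suc N) x\<bar> \<le> 1" using cutoff_bounds[of "inv_Suc N" x] by auto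
    then show "norm (h x * (1 - cutoff (inv_Suc N) x)) \<le> \<bar>h x\<bar>"
      by (simp add: abs_mult mult_left_le)
  qed
qed (use assms(2) in simp_all)

lemma measure_ball_scale:
  "r \<ge> 0 \<Longrightarrow> measure lborel (ball (0::real^'n) r) = r ^ CARD('n) * measure lborel (ball (0::real^'n) 1)"
  using content_ball_conv_unit_ball[of r "0::real^'n"] by simp

text \<open>The gradient of \<open>cutoff e\<close> is \<open>O(1/e)\<close> on a ball of volume \<open>O(e\<^sup>n)\<close>, so for \<open>n \<ge> 2\<close> its
  \<open>L\<^sup>1\<close>-norm is \<open>O(e)\<close>.\<close>
lemma integral_cutoff_partial_tendsto_0:
  fixes h :: "real^'n \<Rightarrow> real"
  assumes n2: "CARD('n) \<ge> 2" and [measurable]: "h \<in> borel_measurable borel" and bnd: "\<And>x. \<bar>h x\<bar> \<le> M"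
  shows "(\<lambda>N. integral\<^sup>L lborel (\<lambda>x. h x * cutoff_partial (inv_Suc N) i x)) \<longlonglongrightarrow> 0"
proof (rule Lim_null_comparison)
  define V where "V = measure lborel (ball (0::real^'n) 1)"
  define n where "n = CARD('n)"
  show "(\<lambda>N. \<bar>M\<bar> * (8 * 2^n * V) * inv_Suc N) \<longlonglongrightarrow> 0"
    using tendsto_mult_right_zero[OF inv_Suc_tendsto_0] by simp
  show "\<forall>\<^sub>F N in sequentially. norm (LBINT x. h x * cutoff_partial (inv_Suc N) i x) \<le> \<bar>M\<bar> * (8 * 2^n * V) * inv_Suc N"
  proof (intro always_eventually allI)
    fix N
    define e where "e = inv_Suc N"
    have e: "0 < e" "e \<le> 1" using inv_Suc_pos inv_Suc_le_1 by (auto simp: e_def)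
    define w where "w x = \<bar>M\<bar> * ((8 / e) * indicator (ball (0::real^'n) (2 * e)) x)" for x
    have w: "integrable lborel w"
      unfolding w_def by (intro integrable_mult_right integrable_real_indicator)
        (simp_all add: emeasure_lborel_ball_finite[unfolded infinity_ennreal_def])
    have hw: "\<bar>h x * cutoff_partial e i x\<bar> \<le> w x" for x
      unfolding abs_mult w_def using bnd[of x] cutoff_partial_bound[OF e(1), of i x]
      by (intro mult_mono) (auto intro: order_trans)
    have "e^n \<le> e * e"
      using power_decreasing[of 2 n e] n2 e by (simp add: n_def power2_eq_square)
    then have "(8 / e) * ((2 * e)^n * V) \<le> (8 / e) * (2^n * (e * e) * V)"
      using e by (intro mult_left_mono mult_right_mono) (auto simp: V_def power_mult_distrib)
    also have "\<dots> = 8 * 2^n * V * e" using e by (simp add: field_simps)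
    moreover have "measure lborel (ball (0::real^'n) (2 * e)) = (2 * e)^n * V"
      using measure_ball_scale[of "2 * e"] e by (simp add: n_def V_def)
    ultimately have meas: "(8 / e) * measure lborel (ball (0::real^'n) (2 * e)) \<le> 8 * 2^n * V * e"
      by simp
    have "norm (LBINT x. h x * cutoff_partial e i x) \<le> (LBINT x. norm (h x * cutoff_partial e i x))"
      by (rule integral_norm_bound)
    also have "\<dots> \<le> integral\<^sup>L lborel w"
      using hw order_trans[OF abs_ge_zero hw] by (intro integral_mono'[OF w]) auto
    also have "\<dots> = \<bar>M\<bar> * ((8 / e) * measure lborel (ball (0::real^'n) (2 * e)))"
      by (simp add: w_def[abs_def])
    also have "\<dots> \<le> \<bar>M\<bar> * (8 * 2^n * V) * e"
      using mult_left_mono[OF meas abs_ge_zero[of M]] by (simp add: mult.assoc)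
    finally show "norm (LBINT x. h x * cutoff_partial (inv_Suc N) i x) \<le> \<bar>M\<bar> * (8 * 2^n * V) * inv_Suc N"
      by (simp add: e_def)
  qed
qed

section \<open>Integrability of \<open>|x|\<^sup>-\<^sup>2\<close> on the unit ball\<close>

lemma inverse_norm_square_le_dyadic_sum:
  fixes x :: "real^'n"
  assumes "x \<noteq> 0"
  shows "summable (\<lambda>k. 4^(k+1) * indicator (ball 0 ((1/2)^k)) x :: real)"
    and "norm x < 1 \<Longrightarrow> 1 / (norm x)^2 \<le> (\<Sum>k. 4^(k+1) * indicator (ball 0 ((1/2)^k)) x :: real)"
proof -
  define S where "S = {k. norm x < (1/2::real)^k}"
  have nx: "norm x > 0" using assms by simp
  obtain K where K: "(1/2::real)^K < norm x" using real_arch_pow_inv[OF nx, of "1/2"] by auto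
  have "S \<subseteq> {..<K}"
  proof
    fix k assume "k \<in> S"
    then show "k \<in> {..<K}"
      using K by (cases "k < K") (auto simp: S_def not_less dest!: power_decreasing[of K k "1/2::real"])
  qed
  then have fin: "finite S" by (rule finite_subset) auto
  have "(\<lambda>k. 4^(k+1) * indicator (ball 0 ((1/2)^k)) x :: real) sums
      (\<Sum>k\<in>S. 4^(k+1) * indicator (ball 0 ((1/2)^k)) x)"
    by (rule sums_finite[OF fin]) (simp add: S_def indicator_def)
  then show s: "summable (\<lambda>k. 4^(k+1) * indicator (ball 0 ((1/2)^k)) x :: real)"
    by (rule sums_summable)
  assume "norm x < 1"
  then have "0 \<in> S" by (simp add: S_def)
  define j where "j = Max S"
  have jS: "j \<in> S" unfolding j_def using fin \<open>0 \<in> S\<close> by (intro Max_in) auto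
  have "j + 1 \<notin> S" using fin jS by (metis Max_ge j_def add_le_same_cancel1 le_zero_eq one_neq_zero)
  then have "(1/2)^(j+1) \<le> norm x" by (simp add: S_def)
  then have "1 / (norm x)^2 \<le> 1 / ((1/2)^(j+1))^2"
    using nx by (intro divide_left_mono power_mono mult_pos_pos) auto
  also have "\<dots> = 4^(j+1)"
    by (simp add: power_one_over power_mult_distrib[symmetric] power_mult[symmetric]
        mult.commute[of _ 2] power_mult)
  also have "\<dots> = (\<Sum>k\<in>{j}. 4^(k+1) * indicator (ball 0 ((1/2)^k)) x)"
    using jS by (simp add: S_def indicator_def)
  also have "\<dots> \<le> (\<Sum>k. 4^(k+1) * indicator (ball 0 ((1/2)^k)) x)"
    by (rule sum_le_suminf[OF s]) auto
  finally show "1 / (norm x)^2 \<le> (\<Sum>k. 4^(k+1) * indicator (ball 0 ((1/2)^k)) x :: real)" .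
qed

text \<open>The ball of radius \<open>2\<^sup>-\<^sup>k\<close> has volume \<open>O(2\<^sup>-\<^sup>3\<^sup>k)\<close> against the weight \<open>4\<^sup>k\<close>.\<close>
lemma summable_dyadic_ball_measure:
  assumes n3: "CARD('n) \<ge> 3"
  shows "summable (\<lambda>k. 4^(k+1) * measure lborel (ball (0::real^'n) ((1/2)^k)))"
proof (rule summable_comparison_test)
  define V where "V = measure lborel (ball (0::real^'n) 1)"
  show "summable (\<lambda>k. 4 * V * (1/2::real)^k)" by (intro summable_mult summable_geometric) auto
  show "\<exists>N. \<forall>k\<ge>N. norm (4^(k+1) * measure lborel (ball (0::real^'n) ((1/2)^k))) \<le> 4 * V * (1/2)^k"
  proof (intro exI allI impI)
    fix k :: nat
    have "(1/2::real)^CARD('n) \<le> (1/2)^3" using n3 by (intro power_decreasing) auto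
    then have h: "4 * (1/2::real)^CARD('n) \<le> 1/2" by (simp add: power3_eq_cube)
    have "4^(k+1) * ((1/2::real)^k)^CARD('n) = 4 * (4 * (1/2)^CARD('n))^k"
      by (simp add: power_mult[symmetric] mult.commute[of k "CARD('n)"] power_mult_distrib)
    also have "\<dots> \<le> 4 * (1/2)^k" using h by (intro mult_left_mono power_mono) auto
    finally show "norm (4^(k+1) * measure lborel (ball (0::real^'n) ((1/2)^k))) \<le> 4 * V * (1/2)^k"
      using measure_ball_scale[of "(1/2)^k", where 'n='n] mult_right_mono[of _ _ V]
      by (simp add: V_def mult_ac)
  qed
qed

lemma integrable_inverse_norm_square:
  assumes n3: "CARD('n) \<ge> 3"
  shows "integrable lborel (\<lambda>x::real^'n. indicator (ball 0 1) x / (norm x)^2)"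
proof -
  define f :: "nat \<Rightarrow> real^'n \<Rightarrow> real" where "f k x = 4^(k+1) * indicator (ball 0 ((1/2)^k)) x" for k x
  have f: "integrable lborel (f k)" for k
    unfolding f_def by (intro integrable_mult_right integrable_real_indicator)
      (simp_all add: emeasure_lborel_ball_finite[unfolded infinity_ennreal_def])
  have "(LINT x|lborel. norm (f k x)) = 4^(k+1) * measure lborel (ball (0::real^'n) ((1/2)^k))" for k
    by (simp add: f_def[abs_def] abs_mult)
  then have "summable (\<lambda>k. LINT x|lborel. norm (f k x))"
    using summable_dyadic_ball_measure[OF n3] by simp
  moreover have "AE x in lborel. summable (\<lambda>k. norm (f k x))"
    using AE_lborel_singleton[of "0::real^'n"]
  proof (rule eventually_mono)
    fix x :: "real^'n" assume "x \<noteq> 0"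
    then show "summable (\<lambda>k. norm (f k x))"
      using inverse_norm_square_le_dyadic_sum(1)[of x] by (simp add: f_def abs_mult)
  qed
  ultimately have "integrable lborel (\<lambda>x. \<Sum>k. f k x)"
    by (intro integrable_suminf f)
  then show ?thesis
  proof (rule Bochner_Integration.integrable_bound)
    have [measurable]: "ball (0::real^'n) 1 \<in> sets borel" by simp
    have [measurable]: "(\<lambda>x::real^'n. (norm x)^2) \<in> borel_measurable borel"
      by (intro borel_measurable_continuous_onI continuous_intros)
    show "(\<lambda>x::real^'n. indicator (ball 0 1) x / (norm x)^2) \<in> borel_measurable lborel"
      by measurable
    show "AE x in lborel. norm (indicator (ball 0 1) x / (norm x)^2) \<le> norm (\<Sum>k. f k x)"
      using AE_lborel_singleton[of "0::real^'n"]
    proof (rule eventually_mono)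
      fix x :: "real^'n" assume "x \<noteq> 0"
      have "0 \<le> (\<Sum>k. f k x)"
        using inverse_norm_square_le_dyadic_sum(1)[OF \<open>x \<noteq> 0\<close>]
        by (intro suminf_nonneg) (simp_all add: f_def)
      then show "norm (indicator (ball 0 1) x / (norm x)^2) \<le> norm (\<Sum>k. f k x)"
        using inverse_norm_square_le_dyadic_sum(2)[OF \<open>x \<noteq> 0\<close>] by (simp add: f_def indicator_def)
    qed
  qed
qed

section \<open>Weak derivatives across a point singularity\<close>

lemma test_funE:
  fixes \<phi> :: "real^'n \<Rightarrow> real"
  assumes "test_fun U \<phi>"
  obtains K Mp Md where "compact K" "K \<subseteq> U" "\<And>x. x \<notin> K \<Longrightarrow> \<phi> x = 0"
    "\<And>x. x \<notin> K \<Longrightarrow> partial i \<phi> x = 0"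
    "\<And>x. \<phi> differentiable (at x)" "\<And>x. partial i \<phi> differentiable (at x)"
    "\<And>x. \<bar>\<phi> x\<bar> \<le> Mp" "\<And>x. \<bar>partial i \<phi> x\<bar> \<le> Md"
    "\<phi> \<in> borel_measurable borel" "partial i \<phi> \<in> borel_measurable borel"
proof -
  from assms obtain K where K: "compact K" "K \<subseteq> U" "\<And>x. x \<notin> K \<Longrightarrow> \<phi> x = 0"
    and sm: "smooth_fun \<phi>" unfolding test_fun_def by blast
  have d0: "\<phi> differentiable (at x)" for x
    using sm iter_partial.simps(1) unfolding smooth_fun_def by metis
  have d1: "partial i \<phi> differentiable (at x)" for x
    using sm iter_partial.simps unfolding smooth_fun_def by metis
  have z1: "partial i \<phi> x = 0" if "x \<notin> K" for x
    using partial_vanishing_open(2)[of "- K"] K that by (auto simp: compact_imp_closed open_Compl)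
  have c0: "continuous_on UNIV \<phi>" and c1: "continuous_on UNIV (partial i \<phi>)"
    using d0 d1 by (simp_all add: continuous_at_imp_continuous_on differentiable_imp_continuous_within)
  have "bounded (\<phi> ` K)" "bounded (partial i \<phi> ` K)"
    using compact_continuous_image[OF continuous_on_subset K(1)] c0 c1 compact_imp_bounded by blast+
  then obtain Mp Md where "\<And>y. y \<in> \<phi> ` K \<Longrightarrow> norm y \<le> Mp" "\<And>y. y \<in> partial i \<phi> ` K \<Longrightarrow> norm y \<le> Md"
    unfolding bounded_iff by metis
  then have "\<bar>\<phi> x\<bar> \<le> \<bar>Mp\<bar>" "\<bar>partial i \<phi> x\<bar> \<le> \<bar>Md\<bar>" for x
    using K(3)[of x] z1[of x] by (cases "x \<in> K"; force)+
  then show ?thesis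
    using that K z1 d0 d1 borel_measurable_continuous_onI[OF c0] borel_measurable_continuous_onI[OF c1]
    by blast
qed

definition punctured_partial :: "'n \<Rightarrow> (real^'n \<Rightarrow> real) \<Rightarrow> real^'n \<Rightarrow> real" where
  "punctured_partial i f x = (if x \<in> ball 0 1 - {0} then partial i f x else 0)"

lemma set_integral_lebesgue_eq_lborel:
  fixes h :: "'a::euclidean_space \<Rightarrow> real"
  assumes "(\<lambda>x. indicator U x * h x) \<in> borel_measurable borel"
  shows "(LINT x : U | lebesgue. h x) = (LBINT x. indicator U x * h x)"
  unfolding set_lebesgue_integral_def using integral_completion[of _ lborel] assms by simp

lemma L2_on_of_lborel:
  fixes g :: "real^'n \<Rightarrow> real"
  assumes "(\<lambda>x. indicator U x * g x) \<in> borel_measurable borel"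
    and "integrable lborel (\<lambda>x. indicator U x * (g x)^2)"
  shows "L2_on U g"
proof -
  have eq: "(\<lambda>x. indicator U x * (g x)^2) = (\<lambda>x. (indicator U x * g x)^2)"
    by (auto simp: fun_eq_iff indicator_def)
  have "(\<lambda>x. (indicator U x * g x)^2) \<in> borel_measurable borel" using assms(1) by measurable
  then have "integrable lebesgue (\<lambda>x. indicator U x * (g x)^2)"
    using assms(2) integrable_completion[of "\<lambda>x. (indicator U x * g x)^2" lborel] by (simp add: eq)
  moreover have "(\<lambda>x. indicator U x * g x) \<in> borel_measurable lebesgue"
    using assms(1) by (intro measurable_completion) simp
  ultimately show ?thesis
    unfolding L2_on_def set_borel_measurable_def set_integrable_def by simp
qed

lemma indicator_times_punctured_partial:
  "indicator (ball 0 1) x * punctured_partial i f x = punctured_partial i f x"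
  by (simp add: punctured_partial_def indicator_def)

context
  fixes f :: "real^'n::finite \<Rightarrow> real" and B C :: real
  assumes f_bounded: "\<And>x. x \<in> ball 0 1 \<Longrightarrow> \<bar>f x\<bar> \<le> B"
    and f_differentiable: "\<And>x. x \<in> ball 0 1 - {0} \<Longrightarrow> f differentiable (at x)"
    and partial_f_bounded: "\<And>x i. x \<in> ball 0 1 - {0} \<Longrightarrow> \<bar>partial i f x\<bar> \<le> C / norm x"
begin

lemma borel_measurable_restrict_unit_ball: "(\<lambda>x. indicator (ball 0 1) x * f x) \<in> borel_measurable borel"
proof -
  have [measurable]: "ball 0 1 - {0::real^'n} \<in> sets borel" by auto
  have "continuous_on (ball 0 1 - {0}) f"
    using f_differentiable by (intro continuous_at_imp_continuous_on)
      (auto intro: differentiable_imp_continuous_within)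
  then have [measurable]: "(\<lambda>x. indicator (ball 0 1 - {0}) x *\<^sub>R f x) \<in> borel_measurable borel"
    by (rule borel_measurable_continuous_on_indicator[rotated]) simp
  have "(\<lambda>x. indicator (ball 0 1) x * f x) = (\<lambda>x. indicator (ball 0 1 - {0}) x *\<^sub>R f x + indicator {0} x * f 0)"
    by (auto simp: fun_eq_iff indicator_def)
  then show ?thesis by (simp only:) measurable
qed

lemma borel_measurable_punctured_partial[measurable]: "punctured_partial i f \<in> borel_measurable borel"
  using borel_measurable_partial_on_open[of "ball 0 1 - {0}" f i] f_differentiable
  by (simp add: punctured_partial_def[abs_def] open_Diff)

lemma punctured_partial_bound:
  "\<bar>punctured_partial i f x\<bar> \<le> \<bar>C\<bar> * (indicator (ball 0 1) x / (norm x)^2)"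
  "(punctured_partial i f x)^2 \<le> C^2 * (indicator (ball 0 1) x / (norm x)^2)"
proof -
  consider "x \<notin> ball 0 1 - {0}" | "x \<in> ball 0 1 - {0}" by blast
  then have "\<bar>punctured_partial i f x\<bar> \<le> \<bar>C\<bar> * (indicator (ball 0 1) x / (norm x)^2) \<and>
    (punctured_partial i f x)^2 \<le> C^2 * (indicator (ball 0 1) x / (norm x)^2)"
  proof cases
    case 2
    then have n: "0 < norm x" "norm x < 1" by auto
    have v: "\<bar>punctured_partial i f x\<bar> \<le> \<bar>C\<bar> / norm x"
      using partial_f_bounded[OF 2, of i] 2
      by (simp add: punctured_partial_def) (meson abs_ge_self divide_right_mono norm_ge_zero order_trans)
    also have "\<dots> \<le> \<bar>C\<bar> / (norm x)^2"
      using n by (intro divide_left_mono) (auto simp: power2_eq_square mult_le_cancel_left1)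
    moreover have "(punctured_partial i f x)^2 \<le> (\<bar>C\<bar> / norm x)^2"
      using power_mono[OF v abs_ge_zero, of 2] by simp
    ultimately show ?thesis using 2 by (simp add: indicator_def power_divide)
  qed (auto simp: punctured_partial_def)
  then show "\<bar>punctured_partial i f x\<bar> \<le> \<bar>C\<bar> * (indicator (ball 0 1) x / (norm x)^2)"
    "(punctured_partial i f x)^2 \<le> C^2 * (indicator (ball 0 1) x / (norm x)^2)"
    by auto
qed

text \<open>The cutoff removes the singularity of \<open>f\<close>, so the product is differentiable everywhere.\<close>
lemma partial_cutoff_product:
  assumes e: "e > 0" and tf: "test_fun (ball 0 1) \<phi>"
  shows "(\<lambda>y. f y * (\<phi> y * (1 - cutoff e y))) differentiable (at x)" (is ?D)
    and "partial i (\<lambda>y. f y * (\<phi> y * (1 - cutoff e y))) x =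
      punctured_partial i f x * \<phi> x * (1 - cutoff e x)
      + indicator (ball 0 1) x * f x * partial i \<phi> x * (1 - cutoff e x)
      - indicator (ball 0 1) x * f x * \<phi> x * cutoff_partial e i x" (is ?P)
proof -
  obtain K where K: "compact K" "K \<subseteq> ball 0 1" and \<phi>0: "\<And>x. x \<notin> K \<Longrightarrow> \<phi> x = 0"
    and d\<phi>0: "\<And>x. x \<notin> K \<Longrightarrow> partial i \<phi> x = 0" and d\<phi>: "\<And>x. \<phi> differentiable (at x)"
    using test_funE[OF tf, of i] by metis
  define g where "g = (\<lambda>y. f y * (\<phi> y * (1 - cutoff e y)))"
  define w where "w = (\<lambda>y. \<phi> y * (1 - cutoff e y))"
  have g_w: "g = (\<lambda>y. f y * w y)" by (simp add: g_def w_def)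
  have dc: "(\<lambda>y. 1 - cutoff e y) differentiable (at x)" for x
    by (intro differentiable_diff differentiable_const cutoff_differentiable)
  have "g differentiable (at x) \<and> partial i g x =
      punctured_partial i f x * \<phi> x * (1 - cutoff e x)
      + indicator (ball 0 1) x * f x * partial i \<phi> x * (1 - cutoff e x)
      - indicator (ball 0 1) x * f x * \<phi> x * cutoff_partial e i x"
  proof -
    consider "x \<notin> K" | "x \<in> K" "norm x < e" | "x \<in> ball 0 1 - {0}" "norm x \<ge> e"
      using K(2) e by force
    then show ?thesis
    proof cases
      case 1
      have "g y = 0" if "y \<in> - K" for y using \<phi>0 that by (simp add: g_def)
      then show ?thesis
        using partial_vanishing_open(1)[of "- K" x g] partial_vanishing_open(2)[of "- K" x g i] 1 K(1) \<phi>0[OF 1] d\<phi>0[OF 1]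
        by (simp add: compact_imp_closed open_Compl)
    next
      case 2
      have "g y = 0" if "y \<in> ball 0 e" for y using cutoff_eq_1[OF e, of y] that by (simp add: g_def)
      then show ?thesis
        using partial_vanishing_open(1)[of "ball 0 e" x g] partial_vanishing_open(2)[of "ball 0 e" x g i] 2 cutoff_eq_1[OF e 2(2)]
          cutoff_partial_eq_0_near[OF e 2(2)] by simp
    next
      case 3
      have dw: "w differentiable (at x)"
        unfolding w_def[abs_def] by (intro differentiable_mult d\<phi> dc)
      have pw: "partial i w x = \<phi> x * (- cutoff_partial e i x) + partial i \<phi> x * (1 - cutoff e x)"
        unfolding w_def[abs_def] partial_mult[OF d\<phi> dc] partial_one_minus_cutoff ..
      have pg: "partial i g x = f x * partial i w x + partial i f x * w x"
        unfolding g_w by (rule partial_mult[OF f_differentiable[OF 3(1)] dw])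
      have "g differentiable (at x)"
        unfolding g_w by (intro differentiable_mult f_differentiable[OF 3(1)] dw)
      then show ?thesis
        unfolding pg pw using 3 by (simp add: punctured_partial_def w_def algebra_simps)
    qed
  qed
  then show "?D" "?P" unfolding g_def by simp_all
qed

lemma cutoff_product_partial_bounded:
  assumes e: "e > 0" and tf: "test_fun (ball 0 1) \<phi>"
  obtains M where "\<And>x. \<bar>punctured_partial i f x * \<phi> x * (1 - cutoff e x)
      + indicator (ball 0 1) x * f x * partial i \<phi> x * (1 - cutoff e x)
      - indicator (ball 0 1) x * f x * \<phi> x * cutoff_partial e i x\<bar> \<le> M"
proof -
  obtain Mp Md where Mp: "\<And>x. \<bar>\<phi> x\<bar> \<le> Mp" and Md: "\<And>x. \<bar>partial i \<phi> x\<bar> \<le> Md"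
    using test_funE[OF tf, of i] by metis
  have fU: "\<bar>indicator (ball 0 1) x * f x\<bar> \<le> \<bar>B\<bar>" for x
    using f_bounded[of x] by (auto simp: indicator_def)
  have c1: "\<bar>1 - cutoff e x\<bar> \<le> 1" for x
    using cutoff_bounds[of e x] by auto
  have c2: "\<bar>cutoff_partial e i x\<bar> \<le> 8 / e" for x
  proof -
    have "(8 / e) * indicator (ball 0 (2 * e)) x \<le> 8 / e" using e by (simp add: indicator_def)
    then show ?thesis using cutoff_partial_bound[OF e, of i x] by linarith
  qed
  text \<open>Where the cutoff is not identically 1, \<open>norm x \<ge> e\<close> controls the singular term.\<close>
  have T1: "\<bar>punctured_partial i f x * \<phi> x * (1 - cutoff e x)\<bar> \<le> \<bar>C\<bar> / e * \<bar>Mp\<bar>" for x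
  proof (cases "norm x < e")
    case False
    have "\<bar>punctured_partial i f x\<bar> \<le> \<bar>C\<bar> / e"
    proof (cases "x \<in> ball 0 1 - {0}")
      case True
      then have "\<bar>punctured_partial i f x\<bar> \<le> \<bar>C\<bar> / norm x"
        using partial_f_bounded[OF True, of i]
        by (simp add: punctured_partial_def) (meson abs_ge_self divide_right_mono norm_ge_zero order_trans)
      also have "\<dots> \<le> \<bar>C\<bar> / e" using False e by (intro divide_left_mono mult_pos_pos) auto
      finally show ?thesis .
    qed (use e in \<open>auto simp: punctured_partial_def\<close>)
    then have pp: "\<bar>punctured_partial i f x\<bar> * \<bar>\<phi> x\<bar> \<le> \<bar>C\<bar> / e * \<bar>Mp\<bar>"
      using Mp[of x] by (intro mult_mono) auto
    show ?thesis
      unfolding abs_mult using mult_mono[OF pp c1[of x]] e by simp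
  qed (use e in \<open>simp add: cutoff_eq_1\<close>)
  have T2: "\<bar>indicator (ball 0 1) x * f x * partial i \<phi> x * (1 - cutoff e x)\<bar> \<le> \<bar>B\<bar> * \<bar>Md\<bar> * 1"
    and T3: "\<bar>indicator (ball 0 1) x * f x * \<phi> x * cutoff_partial e i x\<bar> \<le> \<bar>B\<bar> * \<bar>Mp\<bar> * (8 / e)" for x
    unfolding abs_mult using fU[of x, unfolded abs_mult] Md[of x] Mp[of x] c1[of x] c2[of x]
    by (intro mult_mono; auto intro: order_trans)+
  have "\<bar>punctured_partial i f x * \<phi> x * (1 - cutoff e x)
      + indicator (ball 0 1) x * f x * partial i \<phi> x * (1 - cutoff e x)
      - indicator (ball 0 1) x * f x * \<phi> x * cutoff_partial e i x\<bar>
      \<le> \<bar>C\<bar> / e * \<bar>Mp\<bar> + \<bar>B\<bar> * \<bar>Md\<bar> * 1 + \<bar>B\<bar> * \<bar>Mp\<bar> * (8 / e)" for x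
    using T1[of x] T2[of x] T3[of x] by linarith
  then show ?thesis by (rule that)
qed

lemma integral_partial_cutoff_product:
  assumes e: "e > 0" and tf: "test_fun (ball 0 1) \<phi>"
  shows "(LBINT x. punctured_partial i f x * \<phi> x * (1 - cutoff e x)
      + indicator (ball 0 1) x * f x * partial i \<phi> x * (1 - cutoff e x)
      - indicator (ball 0 1) x * f x * \<phi> x * cutoff_partial e i x) = 0"
proof -
  obtain K where K: "K \<subseteq> ball 0 1" and \<phi>0: "\<And>x. x \<notin> K \<Longrightarrow> \<phi> x = 0"
    using test_funE[OF tf] by metis
  define g where "g y = f y * (\<phi> y * (1 - cutoff e y))" for y
  have pg: "partial i g = (\<lambda>x. punctured_partial i f x * \<phi> x * (1 - cutoff e x)
      + indicator (ball 0 1) x * f x * partial i \<phi> x * (1 - cutoff e x)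
      - indicator (ball 0 1) x * f x * \<phi> x * cutoff_partial e i x)"
    using partial_cutoff_product(2)[OF e tf] by (simp add: g_def[abs_def] fun_eq_iff)
  obtain M where "\<bar>partial i g x\<bar> \<le> M" for x
    using cutoff_product_partial_bounded[OF e tf, of i] unfolding pg by blast
  moreover have "g x = 0" if "norm x > 1" for x
    using K that \<phi>0[of x] by (force simp: g_def)
  ultimately have "integral\<^sup>L lborel (partial i g) = 0"
    using integral_partial_eq_0(2)[of g i M 1] partial_cutoff_product(1)[OF e tf]
    unfolding g_def[abs_def] by blast
  then show ?thesis by (simp add: pg)
qed

lemma weak_partial_punctured_partial:
  assumes n2: "CARD('n) \<ge> 2" and v: "integrable lborel (punctured_partial i f)"
    and tf: "test_fun (ball 0 1) \<phi>"
  shows "(LBINT x. indicator (ball 0 1) x * f x * partial i \<phi> x) = - (LBINT x. punctured_partial i f x * \<phi> x)"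
proof -
  obtain K Mp Md where Mp: "\<And>x. \<bar>\<phi> x\<bar> \<le> Mp" and Md: "\<And>x. \<bar>partial i \<phi> x\<bar> \<le> Md"
    and \<phi>0: "\<And>x. x \<notin> K \<Longrightarrow> \<phi> x = 0" and K: "K \<subseteq> ball 0 1"
    and [measurable]: "\<phi> \<in> borel_measurable borel" "partial i \<phi> \<in> borel_measurable borel"
    using test_funE[OF tf, of i] by metis
  define fU where "fU x = indicator (ball 0 1) x * f x" for x
  have [measurable]: "fU \<in> borel_measurable borel"
    using borel_measurable_restrict_unit_ball by (simp add: fU_def[abs_def])
  have fU: "\<bar>fU x\<bar> \<le> \<bar>B\<bar>" for x
    using f_bounded[of x] by (auto simp: fU_def indicator_def)
  define v\<phi> where "v\<phi> x = punctured_partial i f x * \<phi> x" for x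
  define fd\<phi> where "fd\<phi> x = fU x * partial i \<phi> x" for x
  define f\<phi> where "f\<phi> x = fU x * \<phi> x" for x
  have [measurable]: "v\<phi> \<in> borel_measurable borel" "fd\<phi> \<in> borel_measurable borel"
    "f\<phi> \<in> borel_measurable borel"
    unfolding v\<phi>_def[abs_def] fd\<phi>_def[abs_def] f\<phi>_def[abs_def] by measurable
  have f\<phi>: "\<bar>f\<phi> x\<bar> \<le> \<bar>B\<bar> * \<bar>Mp\<bar>" for x
    unfolding f\<phi>_def abs_mult using fU[of x] Mp[of x] by (intro mult_mono) (auto intro: order_trans)
  have iv\<phi>: "integrable lborel v\<phi>"
  proof (rule Bochner_Integration.integrable_bound)
    show "integrable lborel (\<lambda>x. \<bar>Mp\<bar> * \<bar>punctured_partial i f x\<bar>)"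
      using v by (intro integrable_mult_right integrable_abs)
    show "AE x in lborel. norm (v\<phi> x) \<le> norm (\<bar>Mp\<bar> * \<bar>punctured_partial i f x\<bar>)"
      using order_trans[OF Mp abs_ge_self]
      by (intro AE_I2) (simp add: v\<phi>_def abs_mult mult.commute mult_right_mono)
  qed simp
  have ifd\<phi>: "integrable lborel fd\<phi>"
  proof (rule integrable_bounded_vanishing_outside_ball[of _ "\<bar>B\<bar> * \<bar>Md\<bar>" 1])
    show "\<bar>fd\<phi> x\<bar> \<le> \<bar>B\<bar> * \<bar>Md\<bar>" for x
      unfolding fd\<phi>_def abs_mult using fU[of x] Md[of x] by (intro mult_mono) (auto intro: order_trans)
  qed (auto simp: fd\<phi>_def fU_def)
  have "(\<lambda>N. (LBINT x. v\<phi> x * (1 - cutoff (inv_Suc N) x)) + (LBINT x. fd\<phi> x * (1 - cutoff (inv_Suc N) x))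
      - (LBINT x. f\<phi> x * cutoff_partial (inv_Suc N) i x))
      \<longlonglongrightarrow> integral\<^sup>L lborel v\<phi> + integral\<^sup>L lborel fd\<phi> - 0"
    by (intro tendsto_intros integral_one_minus_cutoff_tendsto iv\<phi> ifd\<phi>
        integral_cutoff_partial_tendsto_0[OF n2 _ f\<phi>]) simp_all
  moreover have "(LBINT x. v\<phi> x * (1 - cutoff (inv_Suc N) x)) + (LBINT x. fd\<phi> x * (1 - cutoff (inv_Suc N) x))
      - (LBINT x. f\<phi> x * cutoff_partial (inv_Suc N) i x) = 0" for N
  proof -
    have i1: "integrable lborel (\<lambda>x. v\<phi> x * (1 - cutoff (inv_Suc N) x))"
      and i2: "integrable lborel (\<lambda>x. fd\<phi> x * (1 - cutoff (inv_Suc N) x))"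
      using iv\<phi> ifd\<phi> by (simp_all add: integrable_times_one_minus_cutoff)
    have i3: "integrable lborel (\<lambda>x. f\<phi> x * cutoff_partial (inv_Suc N) i x)"
      by (rule integrable_times_cutoff_partial[OF inv_Suc_pos _ f\<phi>]) simp
    have "(LBINT x. v\<phi> x * (1 - cutoff (inv_Suc N) x) + fd\<phi> x * (1 - cutoff (inv_Suc N) x)
        - f\<phi> x * cutoff_partial (inv_Suc N) i x) = 0"
      using integral_partial_cutoff_product[OF inv_Suc_pos tf, of i N]
      unfolding v\<phi>_def fd\<phi>_def f\<phi>_def fU_def .
    then show ?thesis
      by (simp only: Bochner_Integration.integral_diff[OF Bochner_Integration.integrable_add[OF i1 i2] i3]
          Bochner_Integration.integral_add[OF i1 i2])
  qed
  ultimately have "integral\<^sup>L lborel v\<phi> + integral\<^sup>L lborel fd\<phi> = 0"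
    by (simp add: LIMSEQ_const_iff)
  moreover have "fd\<phi> = (\<lambda>x. indicator (ball 0 1) x * f x * partial i \<phi> x)"
    and "v\<phi> = (\<lambda>x. punctured_partial i f x * \<phi> x)"
    by (simp_all add: fun_eq_iff v\<phi>_def fd\<phi>_def fU_def)
  ultimately show ?thesis by simp
qed

lemma L2_on_unit_ball: "L2_on (ball 0 1) f"
proof (rule L2_on_of_lborel)
  show "integrable lborel (\<lambda>x. indicator (ball 0 1) x * (f x)^2)"
  proof (rule integrable_bounded_vanishing_outside_ball[of _ "B^2" 1])
    show "\<bar>indicator (ball 0 1) x * (f x)^2\<bar> \<le> B^2" for x
      using power_mono[OF f_bounded[of x] abs_ge_zero, of 2] by (simp add: indicator_def)
    have "(\<lambda>x. indicator (ball 0 1) x * (f x)^2) = (\<lambda>x. (indicator (ball 0 1) x * f x)^2)"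
      by (auto simp: fun_eq_iff indicator_def)
    then show "(\<lambda>x. indicator (ball 0 1) x * (f x)^2) \<in> borel_measurable borel"
      using borel_measurable_restrict_unit_ball by simp
  qed (simp add: indicator_def)
qed (rule borel_measurable_restrict_unit_ball)

lemma integrable_punctured_partial:
  assumes "CARD('n) \<ge> 3"
  shows "integrable lborel (punctured_partial i f)"
proof -
  note inv_sq = integrable_inverse_norm_square[OF assms]
  show ?thesis
    using inv_sq punctured_partial_bound(1)
    by (intro Bochner_Integration.integrable_bound[OF integrable_mult_right[OF inv_sq, of "\<bar>C\<bar>"]])
      (auto intro!: AE_I2 intro: order_trans)
qed

lemma L2_on_punctured_partial:
  assumes "CARD('n) \<ge> 3"
  shows "L2_on (ball 0 1) (punctured_partial i f)"
proof (rule L2_on_of_lborel)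
  show "integrable lborel (\<lambda>x. indicator (ball 0 1) x * (punctured_partial i f x)^2)"
  proof (rule Bochner_Integration.integrable_bound
      [OF integrable_mult_right[OF integrable_inverse_norm_square[OF assms], of "C^2"]])
    show "AE x in lborel. norm (indicator (ball 0 1) x * (punctured_partial i f x)^2)
        \<le> norm (C^2 * (indicator (ball 0 1) x / (norm x)^2))"
    proof (intro AE_I2)
      fix x :: "real^'n"
      have e: "indicator (ball 0 1) x * (punctured_partial i f x)^2 = (punctured_partial i f x)^2"
        by (simp add: punctured_partial_def indicator_def)
      show "norm (indicator (ball 0 1) x * (punctured_partial i f x)^2)
          \<le> norm (C^2 * (indicator (ball 0 1) x / (norm x)^2))"
        using punctured_partial_bound(2)[of i x]
          order_trans[OF zero_le_power2 punctured_partial_bound(2)[of i x]]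
        by (simp only: e real_norm_def abs_of_nonneg zero_le_power2)
    qed
  qed (simp add: indicator_def)
qed (unfold indicator_times_punctured_partial, rule borel_measurable_punctured_partial)

theorem sobolev_H12_of_punctured_gradient_bound:
  assumes n3: "CARD('n) \<ge> 3"
  shows "sobolev_H12 (ball 0 1) f"
  unfolding sobolev_H12_def
proof (intro conjI allI exI[of _ "punctured_partial _ f"] L2_on_unit_ball L2_on_punctured_partial[OF n3] impI)
  fix i and \<phi> :: "real^'n \<Rightarrow> real" assume tf: "test_fun (ball 0 1) \<phi>"
  have [measurable]: "ball (0::real^'n) 1 \<in> sets borel" "\<phi> \<in> borel_measurable borel"
    "partial i \<phi> \<in> borel_measurable borel" "(\<lambda>x. indicator (ball 0 1) x * f x) \<in> borel_measurable borel"
    using test_funE[OF tf, of i] borel_measurable_restrict_unit_ball by simp_all metis+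
  have "(LINT x : ball 0 1 | lebesgue. f x * partial i \<phi> x) = (LBINT x. indicator (ball 0 1) x * f x * partial i \<phi> x)"
    by (subst set_integral_lebesgue_eq_lborel) (simp_all only: mult.assoc[symmetric], measurable)
  also have "\<dots> = - (LBINT x. punctured_partial i f x * \<phi> x)"
    using n3 by (intro weak_partial_punctured_partial integrable_punctured_partial tf) simp_all
  also have "(LBINT x. punctured_partial i f x * \<phi> x)
      = (LINT x : ball 0 1 | lebesgue. punctured_partial i f x * \<phi> x)"
    by (subst set_integral_lebesgue_eq_lborel) (simp_all add: indicator_times_punctured_partial mult.assoc[symmetric])
  finally show "(LINT x : ball 0 1 | lebesgue. f x * partial i \<phi> x)
      = - (LINT x : ball 0 1 | lebesgue. punctured_partial i f x * \<phi> x)" .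
qed

end

section \<open>First-order bounds along lines\<close>

definition jet_bound :: "(real \<Rightarrow> real) \<Rightarrow> real \<Rightarrow> real \<Rightarrow> bool" where
  "jet_bound h A B \<longleftrightarrow> \<bar>h 0\<bar> \<le> A \<and> (\<exists>D. (h has_real_derivative D) (at 0) \<and> \<bar>D\<bar> \<le> B)"

lemma jet_bound_nonneg: "jet_bound h A B \<Longrightarrow> 0 \<le> A \<and> 0 \<le> B"
  unfolding jet_bound_def by (auto intro: order_trans[OF abs_ge_zero])

lemma jet_bound_mono: "jet_bound h A B \<Longrightarrow> A \<le> A' \<Longrightarrow> B \<le> B' \<Longrightarrow> jet_bound h A' B'"
  unfolding jet_bound_def by (auto intro: order_trans)

lemma jet_bound_const: "jet_bound (\<lambda>t. a) \<bar>a\<bar> 0"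
  unfolding jet_bound_def by (auto intro!: exI[of _ 0] derivative_eq_intros)

lemma jet_bound_add:
  assumes "jet_bound h1 A1 B1" "jet_bound h2 A2 B2"
  shows "jet_bound (\<lambda>t. h1 t + h2 t) (A1 + A2) (B1 + B2)"
proof -
  from assms obtain D1 D2 where "(h1 has_real_derivative D1) (at 0)" "(h2 has_real_derivative D2) (at 0)"
    "\<bar>D1\<bar> \<le> B1" "\<bar>D2\<bar> \<le> B2" "\<bar>h1 0\<bar> \<le> A1" "\<bar>h2 0\<bar> \<le> A2"
    unfolding jet_bound_def by blast
  then show ?thesis unfolding jet_bound_def
    by (intro conjI exI[of _ "D1 + D2"] DERIV_add) (auto intro: order_trans[OF abs_triangle_ineq])
qed

lemma jet_bound_mult:
  assumes "jet_bound h1 A1 B1" "jet_bound h2 A2 B2"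
  shows "jet_bound (\<lambda>t. h1 t * h2 t) (A1 * A2) (A1 * B2 + B1 * A2)"
proof -
  from assms obtain D1 D2 where d: "(h1 has_real_derivative D1) (at 0)" "(h2 has_real_derivative D2) (at 0)"
    "\<bar>D1\<bar> \<le> B1" "\<bar>D2\<bar> \<le> B2" "\<bar>h1 0\<bar> \<le> A1" "\<bar>h2 0\<bar> \<le> A2"
    unfolding jet_bound_def by blast
  have "\<bar>h1 0 * D2 + D1 * h2 0\<bar> \<le> \<bar>h1 0\<bar> * \<bar>D2\<bar> + \<bar>D1\<bar> * \<bar>h2 0\<bar>"
    by (metis abs_mult abs_triangle_ineq)
  also have "\<dots> \<le> A1 * B2 + B1 * A2"
    using d by (intro add_mono mult_mono) auto
  finally show ?thesis
    using DERIV_mult'[OF d(1,2)] d by (auto simp: jet_bound_def abs_mult intro: mult_mono)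
qed

lemma jet_bound_sum:
  assumes "finite S" "\<And>l. l \<in> S \<Longrightarrow> jet_bound (h l) (A l) (B l)"
  shows "jet_bound (\<lambda>t. \<Sum>l\<in>S. h l t) (\<Sum>l\<in>S. A l) (\<Sum>l\<in>S. B l)"
  using assms by (induction S rule: finite_induct) (auto simp: jet_bound_add jet_bound_const[of 0, simplified])

lemma jet_bound_compose:
  assumes "jet_bound h A B" "(g has_real_derivative d) (at (h 0))" "\<bar>d\<bar> \<le> L" "\<bar>g (h 0)\<bar> \<le> A'"
  shows "jet_bound (\<lambda>t. g (h t)) A' (L * B)"
proof -
  from assms(1) obtain D where D: "(h has_real_derivative D) (at 0)" "\<bar>D\<bar> \<le> B"
    unfolding jet_bound_def by blast
  have "((\<lambda>t. g (h t)) has_real_derivative d * D) (at 0)"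
    using DERIV_chain2[OF assms(2) D(1)] by simp
  moreover have "\<bar>d * D\<bar> \<le> L * B" using D(2) assms(3) by (simp add: abs_mult mult_mono)
  ultimately show ?thesis using assms(4) unfolding jet_bound_def by blast
qed

lemma jet_bound_sin: "jet_bound h A B \<Longrightarrow> jet_bound (\<lambda>t. sin (h t)) 1 B"
  and jet_bound_cos: "jet_bound h A B \<Longrightarrow> jet_bound (\<lambda>t. cos (h t)) 1 B"
  using jet_bound_compose[of h A B sin "cos (h 0)" 1 1] jet_bound_compose[of h A B cos "- sin (h 0)" 1 1]
  by (auto intro!: derivative_eq_intros)

lemma jet_bound_power:
  assumes "jet_bound h A B" "A \<le> 1"
  shows "jet_bound (\<lambda>t. h t ^ n) 1 (real n * B)"
proof (induction n)
  case 0
  then show ?case using jet_bound_const[of 1] by simp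
next
  case (Suc n)
  have "0 \<le> A" "0 \<le> B" using jet_bound_nonneg[OF assms(1)] by auto
  then have "A * (real n * B) + B * 1 \<le> real (Suc n) * B"
    using mult_right_mono[OF assms(2), of "real n * B"] by (simp add: algebra_simps)
  then show ?case
    using jet_bound_mult[OF assms(1) Suc] assms(2) by (auto intro: jet_bound_mono)
qed

lemma jet_bound_prod:
  assumes "finite S" "\<And>q. q \<in> S \<Longrightarrow> jet_bound (h q) 1 (B q)"
  shows "jet_bound (\<lambda>t. \<Prod>q\<in>S. h q t) 1 (\<Sum>q\<in>S. B q)"
  using assms
proof (induction S rule: finite_induct)
  case empty
  then show ?case using jet_bound_const[of 1] by simp
next
  case (insert a S)
  then have "jet_bound (\<lambda>t. h a t * (\<Prod>q\<in>S. h q t)) (1 * 1) (1 * (\<Sum>q\<in>S. B q) + B a * 1)"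
    by (intro jet_bound_mult) auto
  then show ?case using insert by (simp add: add.commute)
qed

lemma jet_bound_partial:
  assumes "f differentiable (at x)" "jet_bound (\<lambda>t. f (x + t *\<^sub>R axis i 1)) A B"
  shows "\<bar>f x\<bar> \<le> A" "\<bar>partial i f x\<bar> \<le> B"
proof -
  obtain D where "((\<lambda>t. f (x + t *\<^sub>R axis i 1)) has_real_derivative D) (at 0)" "\<bar>D\<bar> \<le> B"
    using assms(2) unfolding jet_bound_def by blast
  moreover have "((\<lambda>t. f (x + t *\<^sub>R axis i 1)) has_real_derivative partial i f x) (at 0)"
    using partial_along_line[of f x 0 i] assms(1) by simp
  ultimately show "\<bar>partial i f x\<bar> \<le> B" using DERIV_unique by blast
  show "\<bar>f x\<bar> \<le> A" using assms(2) by (simp add: jet_bound_def)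
qed

lemma jet_bound_norm_line:
  fixes x :: "real^'n"
  assumes "x \<noteq> 0"
  shows "jet_bound (\<lambda>t. norm (x + t *\<^sub>R axis i 1)) (norm x) 1"
proof -
  have "((\<lambda>s. norm (x + s *\<^sub>R axis i 1)) has_real_derivative (axis i 1 \<bullet> sgn x)) (at 0)"
    using has_real_derivative_along_line[of norm _ x 0] has_derivative_norm[OF assms] by simp
  moreover have "\<bar>axis i 1 \<bullet> sgn x\<bar> \<le> norm (axis i (1::real)) * norm (sgn x)"
    by (rule Cauchy_Schwarz_ineq2)
  ultimately show ?thesis using assms unfolding jet_bound_def by (auto simp: norm_sgn)
qed

lemma jet_bound_sgn_component_line:
  fixes x :: "real^'n"
  assumes "x \<noteq> 0"
  shows "jet_bound (\<lambda>t. sgn (x + t *\<^sub>R axis i 1) $ q) 1 (2 / norm x)"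
proof -
  obtain E where E: "((\<lambda>t. norm (x + t *\<^sub>R axis i 1)) has_real_derivative E) (at 0)" "\<bar>E\<bar> \<le> 1"
    using jet_bound_norm_line[OF assms, of i] unfolding jet_bound_def by auto
  define a where "a = axis i (1::real) $ q"
  have a: "\<bar>a\<bar> \<le> 1" by (simp add: a_def axis_def)
  have r: "norm x > 0" using assms by simp
  have "((\<lambda>t. (x + t *\<^sub>R axis i 1)$q) has_real_derivative a) (at 0)"
    by (auto simp: a_def intro!: derivative_eq_intros)
  from DERIV_divide[OF this E(1)] r
  have "((\<lambda>t. sgn (x + t *\<^sub>R axis i 1) $ q) has_real_derivative
      (a * norm x - x$q * E) / (norm x * norm x)) (at 0)"
    by (simp add: sgn_div_norm divide_inverse mult.commute)
  moreover have "\<bar>a * norm x - x$q * E\<bar> \<le> 2 * norm x"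
  proof -
    have "\<bar>a * norm x - x$q * E\<bar> \<le> \<bar>a\<bar> * norm x + \<bar>x$q\<bar> * \<bar>E\<bar>"
      by (metis abs_mult abs_triangle_ineq4 abs_norm_cancel)
    also have "\<dots> \<le> 1 * norm x + norm x * 1"
      using a E(2) component_le_norm_cart[of x q] by (intro add_mono mult_mono) auto
    finally show ?thesis by simp
  qed
  then have "\<bar>(a * norm x - x$q * E) / (norm x * norm x)\<bar> \<le> 2 / norm x"
    using r by (simp add: abs_div divide_le_eq field_simps)
  moreover have "\<bar>sgn x $ q\<bar> \<le> 1"
    using component_le_norm_cart[of "sgn x" q] assms by (simp add: norm_sgn)
  ultimately show ?thesis unfolding jet_bound_def by auto
qed

lemma finite_multi_index: "finite {a :: 'n::finite \<Rightarrow> nat. sum a UNIV = k}"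
proof (rule finite_subset)
  show "{a :: 'n \<Rightarrow> nat. sum a UNIV = k} \<subseteq> {a. \<forall>q. (q \<in> UNIV \<longrightarrow> a q \<in> {..k}) \<and> (q \<notin> UNIV \<longrightarrow> a q = 0)}"
  proof
    fix a :: "'n \<Rightarrow> nat" assume "a \<in> {a. sum a UNIV = k}"
    then have "a q \<le> k" for q using member_le_sum[of q UNIV a] by auto
    then show "a \<in> {a. \<forall>q. (q \<in> UNIV \<longrightarrow> a q \<in> {..k}) \<and> (q \<notin> UNIV \<longrightarrow> a q = 0)}" by auto
  qed
  show "finite {a :: 'n \<Rightarrow> nat. \<forall>q. (q \<in> UNIV \<longrightarrow> a q \<in> {..k}) \<and> (q \<notin> UNIV \<longrightarrow> a q = 0)}"
    by (rule finite_set_of_finite_funs) auto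
qed

lemma homog_poly_sgn_jet_bound:
  fixes P :: "real^'n \<Rightarrow> real"
  assumes "homog_poly k P"
  obtains A where "\<And>x i. x \<noteq> 0 \<Longrightarrow> jet_bound (\<lambda>t. P (sgn (x + t *\<^sub>R axis i 1))) A (A * (2 * real k) / norm x)"
proof -
  obtain cf where P: "\<And>y. P y = (\<Sum>a\<in>{a. sum a UNIV = k}. cf a * monomial_fun a y)"
    using assms unfolding homog_poly_def by blast
  show ?thesis
  proof (rule that)
  fix x :: "real^'n" and i assume x: "x \<noteq> 0"
  have "jet_bound (\<lambda>t. monomial_fun a (sgn (x + t *\<^sub>R axis i 1))) 1 (real k * (2 / norm x))"
    if "sum a UNIV = k" for a :: "'n \<Rightarrow> nat"
  proof -
    have "jet_bound (\<lambda>t. monomial_fun a (sgn (x + t *\<^sub>R axis i 1))) 1 (\<Sum>q\<in>UNIV. real (a q) * (2 / norm x))"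
      unfolding monomial_fun_def
      by (intro jet_bound_prod jet_bound_power[OF jet_bound_sgn_component_line[OF x]]) auto
    moreover have "(\<Sum>q\<in>UNIV. real (a q) * (2 / norm x)) = real k * (2 / norm x)"
      using that by (simp only: sum_distrib_right[symmetric] of_nat_sum[symmetric])
    ultimately show ?thesis by simp
  qed
  then have "jet_bound (\<lambda>t. \<Sum>a\<in>{a. sum a UNIV = k}. cf a * monomial_fun a (sgn (x + t *\<^sub>R axis i 1)))
      (\<Sum>a\<in>{a. sum a UNIV = k}. \<bar>cf a\<bar> * 1)
      (\<Sum>a\<in>{a::'n\<Rightarrow>nat. sum a UNIV = k}. \<bar>cf a\<bar> * (real k * (2 / norm x)) + 0 * 1)"
    by (intro jet_bound_sum finite_multi_index jet_bound_mult jet_bound_const) auto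
  moreover have "(\<Sum>a\<in>{a::'n\<Rightarrow>nat. sum a UNIV = k}. \<bar>cf a\<bar> * (real k * (2 / norm x)) + 0 * 1)
      = (\<Sum>a\<in>{a. sum a UNIV = k}. \<bar>cf a\<bar>) * (2 * real k) / norm x"
    by (simp add: sum_distrib_right[symmetric] sum_divide_distrib[symmetric] sum_distrib_left[symmetric] mult_ac)
  ultimately show "jet_bound (\<lambda>t. P (sgn (x + t *\<^sub>R axis i 1)))
      (\<Sum>a\<in>{a. sum a UNIV = k}. \<bar>cf a\<bar>) ((\<Sum>a\<in>{a. sum a UNIV = k}. \<bar>cf a\<bar>) * (2 * real k) / norm x)"
    by (simp add: P)
  qed
qed

corollary sobolev_H12_of_jet_bounds:
  fixes f g :: "real^'n \<Rightarrow> real"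
  assumes n3: "CARD('n) \<ge> 3"
    and fg: "\<And>x. x \<in> ball 0 1 - {0} \<Longrightarrow> f x = g x" and f0: "\<bar>f 0\<bar> \<le> A"
    and diff: "\<And>x. x \<in> ball 0 1 - {0} \<Longrightarrow> g differentiable (at x)"
    and jet: "\<And>x i. x \<in> ball 0 1 - {0} \<Longrightarrow> jet_bound (\<lambda>t. g (x + t *\<^sub>R axis i 1)) A (K / norm x)"
  shows "sobolev_H12 (ball 0 1) f"
proof (rule sobolev_H12_of_punctured_gradient_bound[OF _ _ _ n3])
  have U: "open (ball 0 1 - {0::real^'n})" by (simp add: open_Diff)
  obtain i :: 'n where True by simp
  show "\<bar>f x\<bar> \<le> A" if "x \<in> ball 0 1" for x
  proof (cases "x = 0")
    case False
    then have x: "x \<in> ball 0 1 - {0}" using that by simp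
    then show ?thesis using fg[OF x] jet_bound_partial(1)[OF diff[OF x] jet[OF x, of i]] by simp
  qed (use f0 in simp)
  show "f differentiable (at x)" if "x \<in> ball 0 1 - {0}" for x
    using partial_transform_open(1)[OF U that fg diff[OF that]] by simp
  show "\<bar>partial i f x\<bar> \<le> K / norm x" if "x \<in> ball 0 1 - {0}" for x i
    using partial_transform_open(2)[OF U that fg diff[OF that]]
      jet_bound_partial(2)[OF diff[OF that] jet[OF that, of i]] by simp
qed

section \<open>The components of the equivariant map\<close>

lemma Rmat_cases:
  "(\<forall>t. Rmat m t j l = cos t) \<or> (\<forall>t. Rmat m t j l = - sin t) \<or> (\<forall>t. Rmat m t j l = sin t) \<or> (\<forall>t. Rmat m t j l = 0)"
proof (cases "j < 2*m \<and> l < 2*m \<and> j div 2 = l div 2")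
  case True
  have "j mod 2 = 0 \<or> j mod 2 = 1" "l mod 2 = 0 \<or> l mod 2 = 1" by auto
  then show ?thesis using True by (elim disjE) (simp_all add: Rmat_def Dblock_def)
next
  case False
  then have "\<forall>t. Rmat m t j l = 0" unfolding Rmat_def by auto
  then show ?thesis by blast
qed

lemma jet_bound_Rmat:
  assumes "jet_bound h A B"
  shows "jet_bound (\<lambda>t. Rmat m (h t) j l) 1 B"
proof -
  have "jet_bound (\<lambda>t. - sin (h t)) 1 B"
    using jet_bound_mult[OF jet_bound_const[of "-1"] jet_bound_sin[OF assms]] by simp
  moreover have "jet_bound (\<lambda>t. 0) 1 B"
    using jet_bound_mono[OF jet_bound_const[of 0], of 1 B] jet_bound_nonneg[OF assms] by simp
  ultimately show ?thesis
    using Rmat_cases[of m j l] jet_bound_sin[OF assms] jet_bound_cos[OF assms] by auto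
qed

lemma Rmat_differentiable: "(\<lambda>t. Rmat m t j l) differentiable (at t)"
proof -
  have "sin differentiable (at t)" "cos differentiable (at t)" "(\<lambda>t. - sin t) differentiable (at t)"
    using DERIV_sin DERIV_cos DERIV_minus[OF DERIV_sin] real_differentiable_def by blast+
  moreover have "(\<lambda>t. 0::real) differentiable (at t)" by simp
  moreover note Rmat_cases[of m j l, unfolded fun_eq_iff[symmetric]]
  ultimately show ?thesis by (elim disjE) simp_all
qed

lemma differentiable_prod:
  assumes "\<And>q. q \<in> S \<Longrightarrow> f q differentiable (at x)"
  shows "(\<lambda>y. \<Prod>q\<in>S. f q y :: real) differentiable (at x)"
proof -
  have "(f q has_derivative frechet_derivative (f q) (at x)) (at x)" if "q \<in> S" for q
    using assms[OF that] by (simp only: frechet_derivative_works)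
  note d = has_derivative_prod[OF this]
  show ?thesis unfolding differentiable_def by (rule exI, rule d)
qed

lemma homog_poly_differentiable:
  fixes P :: "real^'n \<Rightarrow> real"
  assumes "homog_poly k P"
  shows "P differentiable (at x)"
proof -
  obtain cf where P: "P = (\<lambda>y. \<Sum>a\<in>{a. sum a UNIV = k}. cf a * monomial_fun a y)"
    using assms unfolding homog_poly_def by blast
  have c: "(\<lambda>y::real^'n. y $ q) differentiable (at x)" for q
    using bounded_linear_vec_nth[of q] by (rule bounded_linear_imp_differentiable)
  show ?thesis unfolding P monomial_fun_def
    by (intro differentiable_sum ballI differentiable_mult differentiable_const differentiable_prod
        differentiable_power c finite_multi_index)
qed

lemma C2_on_unit_deriv_bounded:
  assumes "C2_on_unit \<Phi>"
  obtains \<Phi>' M where "\<And>r. 0 < r \<Longrightarrow> r < 1 \<Longrightarrow> (\<Phi> has_real_derivative \<Phi>' r) (at r)"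
    "\<And>r. 0 < r \<Longrightarrow> r < 1 \<Longrightarrow> \<bar>\<Phi>' r\<bar> \<le> M"
proof -
  from assms obtain \<Phi>' \<Phi>'' where d1: "\<forall>r\<in>{0..1}. (\<Phi> has_real_derivative \<Phi>' r) (at r within {0..1})"
    and d2: "\<forall>r\<in>{0..1}. (\<Phi>' has_real_derivative \<Phi>'' r) (at r within {0..1})"
    unfolding C2_on_unit_def by blast
  have "continuous_on {0..1} \<Phi>'"
    unfolding continuous_on_eq_continuous_within using d2 DERIV_continuous by blast
  then have "compact (\<Phi>' ` {0..1})" by (rule compact_continuous_image) simp
  then obtain M where M: "\<And>y. y \<in> \<Phi>' ` {0..1} \<Longrightarrow> norm y \<le> M"
    using compact_imp_bounded bounded_iff by metis
  show ?thesis
  proof (rule that)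
    fix r :: real assume r: "0 < r" "r < 1"
    then show "(\<Phi> has_real_derivative \<Phi>' r) (at r)"
      using d1[rule_format, of r] at_within_Icc_at[of 0 r 1] by simp
    show "\<bar>\<Phi>' r\<bar> \<le> M" using M[of "\<Phi>' r"] r by auto
  qed
qed

text \<open>Component \<open>j\<close> of \<open>u(x) = (R\<^bsub>c ln r\<^esub> F(x/r) sin \<Phi>(r), cos \<Phi>(r))\<close> with \<open>r = norm x\<close>;
  note \<open>x/r = sgn x\<close>.\<close>
definition twisted_component ::
    "nat \<Rightarrow> real \<Rightarrow> (real \<Rightarrow> real) \<Rightarrow> (real^'n \<Rightarrow> nat \<Rightarrow> real) \<Rightarrow> nat \<Rightarrow> real^'n \<Rightarrow> real" where
  "twisted_component m c \<Phi> F j y =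
     (if j < 2*m then (\<Sum>l<2*m. Rmat m (c * ln (norm y)) j l * F (sgn y) l) * sin (\<Phi> (norm y))
      else if j = 2*m then cos (\<Phi> (norm y)) else 0)"

lemma twisted_component_differentiable:
  fixes F :: "real^'n \<Rightarrow> nat \<Rightarrow> real"
  assumes hom: "\<And>l. l < 2*m \<Longrightarrow> homog_poly k (\<lambda>y. F y l)"
    and \<Phi>: "\<Phi> differentiable (at (norm x))" and x: "x \<noteq> 0"
  shows "twisted_component m c \<Phi> F j differentiable (at x)"
proof -
  have n: "norm differentiable (at x)" by (rule differentiable_norm_at[OF x])
  have \<Phi>n: "(\<lambda>y. \<Phi> (norm y)) differentiable (at x)"
    using differentiable_chain_at[OF n \<Phi>] by (simp add: o_def)
  have R: "(\<lambda>y. Rmat m (c * ln (norm y)) j l) differentiable (at x)" for l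
  proof -
    have "(\<lambda>y. c * ln (norm y)) differentiable (at x)"
      using x by (intro differentiable_mult differentiable_const differentiable_compose_real[OF n DERIV_ln]) simp
    from differentiable_chain_at[OF this Rmat_differentiable] show ?thesis by (simp add: o_def)
  qed
  have "sgn differentiable (at x)"
    using x unfolding sgn_div_norm[abs_def]
    by (intro differentiable_scaleR differentiable_ident differentiable_compose_real[OF n DERIV_inverse]) simp
  then have "(\<lambda>y. F (sgn y) l) differentiable (at x)" if "l < 2*m" for l
    using differentiable_chain_at[OF _ homog_poly_differentiable[OF hom[OF that]]] by (simp add: o_def)
  then show ?thesis
    unfolding twisted_component_def[abs_def] using R \<Phi>n
    by (cases "j < 2*m"; cases "j = 2*m")
      (simp_all, (intro differentiable_mult differentiable_sum ballI
          differentiable_compose_real[OF \<Phi>n DERIV_sin] differentiable_compose_real[OF \<Phi>n DERIV_cos]; simp)+)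
qed

lemma jet_bound_log_norm_line:
  fixes x :: "real^'n"
  assumes "x \<noteq> 0"
  shows "jet_bound (\<lambda>t. c * ln (norm (x + t *\<^sub>R axis i 1))) \<bar>c * ln (norm x)\<bar> (\<bar>c\<bar> / norm x)"
proof -
  have "jet_bound (\<lambda>t. c * ln (norm (x + t *\<^sub>R axis i 1))) \<bar>c * ln (norm x)\<bar> (\<bar>c\<bar> / norm x * 1)"
    by (rule jet_bound_compose[OF jet_bound_norm_line[OF assms]])
      (use assms in \<open>auto intro!: derivative_eq_intros simp: abs_mult\<close>)
  then show ?thesis by simp
qed

lemma jet_bound_rotated_sum:
  fixes x :: "real^'n" and F :: "real^'n \<Rightarrow> nat \<Rightarrow> real"
  assumes x: "x \<noteq> 0"
    and F: "\<And>l. l < 2*m \<Longrightarrow> jet_bound (\<lambda>t. F (sgn (x + t *\<^sub>R axis i 1)) l) (A l) (A l * (2 * real k) / norm x)"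
  shows "jet_bound (\<lambda>t. \<Sum>l<2*m. Rmat m (c * ln (norm (x + t *\<^sub>R axis i 1))) j l * F (sgn (x + t *\<^sub>R axis i 1)) l)
    (\<Sum>l<2*m. A l) ((\<Sum>l<2*m. A l) * (2 * real k + \<bar>c\<bar>) / norm x)"
proof -
  have "jet_bound (\<lambda>t. \<Sum>l<2*m. Rmat m (c * ln (norm (x + t *\<^sub>R axis i 1))) j l * F (sgn (x + t *\<^sub>R axis i 1)) l)
    (\<Sum>l<2*m. 1 * A l) (\<Sum>l<2*m. 1 * (A l * (2 * real k) / norm x) + \<bar>c\<bar> / norm x * A l)"
    by (intro jet_bound_sum jet_bound_mult jet_bound_Rmat[OF jet_bound_log_norm_line[OF x]] F) auto
  moreover have "(\<Sum>l<2*m. 1 * (A l * (2 * real k) / norm x) + \<bar>c\<bar> / norm x * A l)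
      = (\<Sum>l<2*m. A l * ((2 * real k + \<bar>c\<bar>) / norm x))"
    by (rule sum.cong) (auto simp: field_simps add_divide_distrib)
  then have "(\<Sum>l<2*m. 1 * (A l * (2 * real k) / norm x) + \<bar>c\<bar> / norm x * A l)
      = (\<Sum>l<2*m. A l) * (2 * real k + \<bar>c\<bar>) / norm x"
    by (simp add: sum_distrib_right sum_divide_distrib)
  ultimately show ?thesis by simp
qed

lemma twisted_component_jet_bound:
  fixes F :: "real^'n \<Rightarrow> nat \<Rightarrow> real"
  assumes hom: "\<And>l. l < 2*m \<Longrightarrow> homog_poly k (\<lambda>y. F y l)"
    and \<Phi>': "\<And>r. 0 < r \<Longrightarrow> r < 1 \<Longrightarrow> (\<Phi> has_real_derivative \<Phi>' r) (at r)"
    and M: "\<And>r. 0 < r \<Longrightarrow> r < 1 \<Longrightarrow> \<bar>\<Phi>' r\<bar> \<le> M"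
  obtains A K where "1 \<le> A"
    "\<And>x i. x \<in> ball 0 1 - {0} \<Longrightarrow> jet_bound (\<lambda>t. twisted_component m c \<Phi> F j (x + t *\<^sub>R axis i 1)) A (K / norm x)"
proof -
  have "\<forall>l. \<exists>A. l < 2*m \<longrightarrow> (\<forall>x i. x \<noteq> 0 \<longrightarrow>
      jet_bound (\<lambda>t. F (sgn (x + t *\<^sub>R axis i 1)) l) A (A * (2 * real k) / norm x))"
    using homog_poly_sgn_jet_bound[OF hom] by metis
  then obtain Af where Af: "\<And>l x i. l < 2*m \<Longrightarrow> x \<noteq> 0 \<Longrightarrow>
      jet_bound (\<lambda>t. F (sgn (x + t *\<^sub>R axis i 1)) l) (Af l) (Af l * (2 * real k) / norm x)"
    by metis
  obtain i0 :: 'n where True by simp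
  define S where "S = (\<Sum>l<2*m. Af l)"
  have "S \<ge> 0"
    unfolding S_def using jet_bound_nonneg[OF Af[of _ "axis i0 1" i0]] by (intro sum_nonneg) simp
  have "M \<ge> 0" using M[of "1/2"] by auto
  define K where "K = S * (M + 2 * real k + \<bar>c\<bar>) + M"
  show ?thesis
  proof (rule that[of "S + 1" K])
    show "1 \<le> S + 1" using \<open>S \<ge> 0\<close> by simp
    fix x :: "real^'n" and i assume "x \<in> ball 0 1 - {0}"
    then have x: "x \<noteq> 0" and r: "0 < norm x" "norm x < 1" by auto
    have \<Phi>n: "jet_bound (\<lambda>t. \<Phi> (norm (x + t *\<^sub>R axis i 1))) \<bar>\<Phi> (norm x)\<bar> (M * 1)"
      by (rule jet_bound_compose[OF jet_bound_norm_line[OF x]]) (use \<Phi>'[OF r] M[OF r] in simp_all)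
    have "M \<le> M / norm x" using r \<open>M \<ge> 0\<close> by (simp add: le_divide_eq mult_left_le)
    then have MK: "M \<le> K / norm x" and SK: "S * M + S * (2 * real k + \<bar>c\<bar>) / norm x \<le> K / norm x"
      using r \<open>S \<ge> 0\<close> \<open>M \<ge> 0\<close> mult_left_mono[OF \<open>M \<le> M / norm x\<close> \<open>S \<ge> 0\<close>]
      by (auto simp: K_def add_divide_distrib algebra_simps intro: order_trans)
    consider "j < 2*m" | "j = 2*m" | "j > 2*m" by linarith
    then show "jet_bound (\<lambda>t. twisted_component m c \<Phi> F j (x + t *\<^sub>R axis i 1)) (S + 1) (K / norm x)"
    proof cases
      case 1
      have "jet_bound (\<lambda>t. (\<Sum>l<2*m. Rmat m (c * ln (norm (x + t *\<^sub>R axis i 1))) j l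
            * F (sgn (x + t *\<^sub>R axis i 1)) l) * sin (\<Phi> (norm (x + t *\<^sub>R axis i 1))))
          (S * 1) (S * (M * 1) + S * (2 * real k + \<bar>c\<bar>) / norm x * 1)"
        unfolding S_def using x by (intro jet_bound_mult jet_bound_rotated_sum[OF x Af] jet_bound_sin[OF \<Phi>n])
      then show ?thesis using SK 1 by (auto simp: twisted_component_def intro: jet_bound_mono)
    next
      case 2
      show ?thesis
        using jet_bound_cos[OF \<Phi>n] 2 MK \<open>S \<ge> 0\<close> by (auto simp: twisted_component_def intro: jet_bound_mono)
    next
      case 3
      show ?thesis
        using jet_bound_const[of 0] 3 MK \<open>S \<ge> 0\<close> \<open>M \<ge> 0\<close>
        by (auto simp: twisted_component_def intro: jet_bound_mono)
    qed
  qed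
qed

theorem mainTheorem4:
  fixes F :: "real^'n::finite \<Rightarrow> nat \<Rightarrow> real"
    and m k :: nat and \<Phi> :: "real \<Rightarrow> real" and c :: real
    and p :: "nat \<Rightarrow> real" and u uhat :: "real^'n \<Rightarrow> nat \<Rightarrow> real"
  assumes n3: "CARD('n) \<ge> 3"
    and m1: "m \<ge> 1"
    and eig: "eigenmap m k F"
    and C2: "C2_on_unit \<Phi>"
    and p_sphere: "(\<Sum>j\<le>2*m. (p j)^2) = 1"
    and u_def: "\<And>x. u x = (let r = norm x; g = c * ln r;
                   y = Rapply m g (F ((1 / r) *\<^sub>R x))
                 in (\<lambda>j. if j < 2*m then y j * sin (\<Phi> r)
                         else if j = 2*m then cos (\<Phi> r) else 0))"
    and uhat_def: "\<And>x. uhat x = (if x = 0 then p else u x)"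
  shows "sobolev_H12_vec (2*m+1) (ball 0 1) uhat"
  unfolding sobolev_H12_vec_def
proof (intro allI impI)
  fix j assume j: "j < 2*m+1"
  obtain \<Phi>' M where \<Phi>': "\<And>r. 0 < r \<Longrightarrow> r < 1 \<Longrightarrow> (\<Phi> has_real_derivative \<Phi>' r) (at r)"
    and M: "\<And>r. 0 < r \<Longrightarrow> r < 1 \<Longrightarrow> \<bar>\<Phi>' r\<bar> \<le> M"
    using C2_on_unit_deriv_bounded[OF C2] by blast
  have hom: "\<And>l. l < 2*m \<Longrightarrow> homog_poly k (\<lambda>y. F y l)"
    using eig by (simp add: eigenmap_def)
  obtain A K where "1 \<le> A" and jet: "\<And>x i. x \<in> ball 0 1 - {0} \<Longrightarrow>
      jet_bound (\<lambda>t. twisted_component m c \<Phi> F j (x + t *\<^sub>R axis i 1)) A (K / norm x)"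
    using twisted_component_jet_bound[where m=m and k=k and F=F, OF hom \<Phi>' M] by blast
  have "(p j)^2 \<le> 1"
    using member_le_sum[of j "{..2*m}" "\<lambda>j. (p j)^2"] j p_sphere by simp
  then have "\<bar>uhat 0 j\<bar> \<le> A" using \<open>1 \<le> A\<close> by (simp add: uhat_def abs_square_le_1)
  moreover have "uhat x j = twisted_component m c \<Phi> F j x" if "x \<noteq> 0" for x
    using that by (simp add: uhat_def u_def Let_def Rapply_def twisted_component_def sgn_div_norm divide_inverse)
  moreover have "twisted_component m c \<Phi> F j differentiable (at x)" if "x \<in> ball 0 1 - {0}" for x
  proof -
    have "0 < norm x" "norm x < 1" using that by auto
    then have "\<Phi> differentiable (at (norm x))" using \<Phi>' real_differentiable_def by blast
    then show ?thesis using that by (intro twisted_component_differentiable[OF hom]) auto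
  qed
  ultimately show "sobolev_H12 (ball 0 1) (\<lambda>x. uhat x j)"
    using sobolev_H12_of_jet_bounds[OF n3 _ _ _ jet] by auto
qed

end
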